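(* Algorithm Oh-MAM (described in the context) implements an atomic multi-writer/multi-reader read/write register in an asynchronous message-passing system with any number of crash-prone writers and readers and a set $\mathcal{S}$ of servers of which up to $f<|\mathcal{S}|/2$ may crash; i.e., it satisfies both termination and atomicity.
   Context: System model: processes have unique identifiers from a totally ordered set and are partitioned into writers $\mathcal{W}$, readers $\mathcal{R}$ and servers $\mathcal{S}$. Processes are asynchronous; any subset of writers and readers and up to $f<|\mathcal{S}|/2$ servers may crash. Communication is by asynchronous reliable point-to-point channels (messages may be reordered); "broadcast" means sending a point-to-point message to every server. Each process invokes at most one operation at a time. Tags: a tag is a pair $(ts,id)$ with $ts$ a natural number and $id$ a process identifier; tags are compared lexicographically. Algorithm Oh-MAM. Server $s$ stores a tag (initially $(0,s)$), a value $v$ (initially $\perp$), and an array $write\_operations$ indexed by writers (initially all $0$). Write$(val)$ at writer $w$ (which keeps a counter $write\_op$, initially $0$): increment $write\_op$; broadcast $\langle discover, write\_op, w\rangle$; wait for $|\mathcal{S}|/2+1$ $discoverAck$ messages carrying this $write\_op$; let $maxTS$ be the maximum timestamp component among the tags received; set $tag=(maxTS+1,w)$; increment $write\_op$; broadcast $\langle writeRequest, (tag,val), write\_op, w\rangle$; wait for $|\mathcal{S}|/2+1$ $writeAck$ messages carrying this $write\_op$; return. Server on $\langle discover, write\_op, w\rangle$: send $\langle discoverAck, (tag,v), write\_op, s\rangle$ to $w$. Server on $\langle writeRequest,(tag',v'),write\_op,w\rangle$: if $tag<tag'$ and $write\_operations[w]<write\_op$ then set $(tag,v)\leftarrow(tag',v')$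 and $write\_operations[w]\leftarrow write\_op$; in any case send $\langle writeAck,(tag,v),write\_op,s\rangle$ to $w$. Read at reader $r$: broadcast a $readRequest$ message (identifying the read operation) to all servers. A server receiving the $readRequest$ broadcasts a $readRelay$ message carrying its current $(tag,v)$ and identifying the read to all servers. A server receiving a $readRelay$ (whether or not it has yet received the corresponding $readRequest$; relays are never discarded) updates its $(tag,v)$ to the received pair if the received tag is larger; once it has received $readRelay$ messages for that read from $|\mathcal{S}|/2+1$ servers, it sends a $readAck$ carrying its current $(tag,v)$ to $r$. The reader waits for $readAck$ messages from $|\mathcal{S}|/2+1$ servers and returns the value associated with the minimum tag among them. Atomic register: (termination) every operation invoked by a correct process eventually completes; (atomicity) in every execution in which all invoked operations complete, there is a partial order $\prec$ on operations such that: (P1) if $\pi$ completes before $\pi'$ is invoked then not $\pi'\prec\pi$; (P2) all writes are totally ordered and every read is ordered with respect to all writes; (P3) every read returns the value of the last write preceding it in $\prec$, and a read ordered before all writes returns the initial value. *)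

theory Defs
  imports Main "HOL-Library.Multiset" "HOL-Library.Product_Lexorder"
begin

text \<open>Process identifiers are of a linearly ordered type 'p.  Tags are pairs
(ts, id) :: nat \<times> 'p, ordered lexicographically (Product_Lexorder).
Values are of type 'v option, where None is the initial value \<bottom>.\<close>

type_synonym 'p tag = "nat \<times> 'p"

datatype ('p,'v) msg =
    Discover nat 'p                                  (* write_op, writer *)
  | DiscoverAck "'p tag" "'v option" nat 'p          (* (tag,v), write_op, server *)
  | WriteRequest "'p tag" "'v option" nat 'p         (* (tag,val), write_op, writer *)
  | WriteAck "'p tag" "'v option" nat 'p             (* (tag,v), write_op, server *)
  | ReadRequest "'p \<times> nat"                         (* read id = (reader, read counter) *)
  | ReadRelay "'p tag" "'v option" "'p \<times> nat" 'p     (* (tag,v), read id, relaying server *)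
  | ReadAck "'p tag" "'v option" "'p \<times> nat" 'p       (* (tag,v), read id, server *)

text \<open>A packet in transit: (sender, receiver, message).\<close>
type_synonym ('p,'v) packet = "'p \<times> 'p \<times> ('p,'v) msg"

datatype ('p,'v) wphase =
    WIdle
  | WDisc 'v "'p \<rightharpoonup> 'p tag"       (* value to write; discoverAcks received (server \<mapsto> tag) *)
  | WWrite "'p set"                   (* servers whose writeAck has been received *)

datatype ('p,'v) rphase =
    RIdle
  | RWait "'p \<rightharpoonup> ('p tag \<times> 'v option)"  (* readAcks received (server \<mapsto> (tag,v)) *)

datatype 'v opkind = OWrite 'v | ORead

datatype 'v resp = WResp | RResp "'v option"

datatype ('p,'v) label =
    Inv 'p "'v opkind"
  | Dlv "('p,'v) packet" "'v resp option"     (* delivery + handling of a packet, with the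
                                                 response of an operation if one completes *)
  | Crash 'p
  | Idle

record ('p,'v) gstate =
  wop     :: "'p \<Rightarrow> nat"                       (* writer counter write_op *)
  wph     :: "'p \<Rightarrow> ('p,'v) wphase"
  rop     :: "'p \<Rightarrow> nat"
  rph     :: "'p \<Rightarrow> ('p,'v) rphase"
  stag    :: "'p \<Rightarrow> 'p tag"
  sval    :: "'p \<Rightarrow> 'v option"
  swops   :: "'p \<Rightarrow> 'p \<Rightarrow> nat"                (* server array write_operations *)
  srelays :: "'p \<Rightarrow> 'p \<times> nat \<Rightarrow> 'p set"        (* servers from which a relay for a read was received *)
  sacked  :: "'p \<Rightarrow> ('p \<times> nat) set"           (* reads for which a readAck was already sent *)
  net     :: "('p,'v) packet multiset"
  crashed :: "'p set"

definition init_state :: "('p::linorder,'v) gstate" where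
  "init_state = \<lparr> wop = (\<lambda>_. 0), wph = (\<lambda>_. WIdle), rop = (\<lambda>_. 0), rph = (\<lambda>_. RIdle),
      stag = (\<lambda>s. (0, s)), sval = (\<lambda>_. None), swops = (\<lambda>_ _. 0),
      srelays = (\<lambda>_ _. {}), sacked = (\<lambda>_. {}), net = {#}, crashed = {} \<rparr>"

definition bcast :: "'p set \<Rightarrow> 'p \<Rightarrow> ('p,'v) msg \<Rightarrow> ('p,'v) packet multiset" where
  "bcast S src m = image_mset (\<lambda>s. (src, s, m)) (mset_set S)"

definition quorum :: "'p set \<Rightarrow> nat" where
  "quorum S = card S div 2 + 1"

fun server_msg :: "('p,'v) msg \<Rightarrow> bool" where
  "server_msg (Discover _ _) = True"
| "server_msg (WriteRequest _ _ _ _) = True"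
| "server_msg (ReadRequest _) = True"
| "server_msg (ReadRelay _ _ _ _) = True"
| "server_msg _ = False"

fun writer_msg :: "('p,'v) msg \<Rightarrow> bool" where
  "writer_msg (DiscoverAck _ _ _ _) = True"
| "writer_msg (WriteAck _ _ _ _) = True"
| "writer_msg _ = False"

fun reader_msg :: "('p,'v) msg \<Rightarrow> bool" where
  "reader_msg (ReadAck _ _ _ _) = True"
| "reader_msg _ = False"

definition handled :: "'p set \<Rightarrow> 'p set \<Rightarrow> 'p set \<Rightarrow> 'p \<Rightarrow> ('p,'v) msg \<Rightarrow> bool" where
  "handled W R S p m \<longleftrightarrow> (p \<in> S \<and> server_msg m) \<or> (p \<in> W \<and> writer_msg m) \<or> (p \<in> R \<and> reader_msg m)"

text \<open>One atomic step of the whole system.  Receiving a message and executing the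
resulting local computation (up to the next wait) is atomic.\<close>
inductive step :: "'p set \<Rightarrow> 'p set \<Rightarrow> 'p set \<Rightarrow> ('p::linorder,'v) gstate \<Rightarrow> ('p,'v) label
                   \<Rightarrow> ('p,'v) gstate \<Rightarrow> bool"
  for W R S where
  idle: "step W R S \<sigma> Idle \<sigma>"
| crash: "p \<notin> crashed \<sigma> \<Longrightarrow> step W R S \<sigma> (Crash p) (\<sigma>\<lparr>crashed := insert p (crashed \<sigma>)\<rparr>)"
| inv_write: "\<lbrakk> w \<in> W; w \<notin> crashed \<sigma>; wph \<sigma> w = WIdle; k = Suc (wop \<sigma> w) \<rbrakk> \<Longrightarrow>
    step W R S \<sigma> (Inv w (OWrite v))
      (\<sigma>\<lparr>wop := (wop \<sigma>)(w := k), wph := (wph \<sigma>)(w := WDisc v Map.empty),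
         net := net \<sigma> + bcast S w (Discover k w)\<rparr>)"
| inv_read: "\<lbrakk> r \<in> R; r \<notin> crashed \<sigma>; rph \<sigma> r = RIdle; k = Suc (rop \<sigma> r) \<rbrakk> \<Longrightarrow>
    step W R S \<sigma> (Inv r ORead)
      (\<sigma>\<lparr>rop := (rop \<sigma>)(r := k), rph := (rph \<sigma>)(r := RWait Map.empty),
         net := net \<sigma> + bcast S r (ReadRequest (r, k))\<rparr>)"
| srv_discover: "\<lbrakk> (src, s, Discover k w) \<in># net \<sigma>; s \<notin> crashed \<sigma>; s \<in> S \<rbrakk> \<Longrightarrow>
    step W R S \<sigma> (Dlv (src, s, Discover k w) None)
      (\<sigma>\<lparr>net := net \<sigma> - {#(src, s, Discover k w)#}
                 + {#(s, w, DiscoverAck (stag \<sigma> s) (sval \<sigma> s) k s)#}\<rparr>)"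
| srv_write: "\<lbrakk> (src, s, WriteRequest t v k w) \<in># net \<sigma>; s \<notin> crashed \<sigma>; s \<in> S;
    \<sigma>1 = (if stag \<sigma> s < t \<and> swops \<sigma> s w < k
          then \<sigma>\<lparr>stag := (stag \<sigma>)(s := t), sval := (sval \<sigma>)(s := v),
                  swops := (swops \<sigma>)(s := (swops \<sigma> s)(w := k))\<rparr>
          else \<sigma>) \<rbrakk> \<Longrightarrow>
    step W R S \<sigma> (Dlv (src, s, WriteRequest t v k w) None)
      (\<sigma>1\<lparr>net := net \<sigma> - {#(src, s, WriteRequest t v k w)#}
                 + {#(s, w, WriteAck (stag \<sigma>1 s) (sval \<sigma>1 s) k s)#}\<rparr>)"
| srv_readreq: "\<lbrakk> (src, s, ReadRequest rid) \<in># net \<sigma>; s \<notin> crashed \<sigma>; s \<in> S \<rbrakk> \<Longrightarrow>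
    step W R S \<sigma> (Dlv (src, s, ReadRequest rid) None)
      (\<sigma>\<lparr>net := net \<sigma> - {#(src, s, ReadRequest rid)#}
                 + bcast S s (ReadRelay (stag \<sigma> s) (sval \<sigma> s) rid s)\<rparr>)"
| srv_relay: "\<lbrakk> (src, s, ReadRelay t v rid s') \<in># net \<sigma>; s \<notin> crashed \<sigma>; s \<in> S;
    \<sigma>1 = (if stag \<sigma> s < t then \<sigma>\<lparr>stag := (stag \<sigma>)(s := t), sval := (sval \<sigma>)(s := v)\<rparr> else \<sigma>);
    \<sigma>2 = \<sigma>1\<lparr>srelays := (srelays \<sigma>1)(s := (srelays \<sigma>1 s)(rid := insert s' (srelays \<sigma>1 s rid)))\<rparr>;
    \<sigma>3 = (if quorum S \<le> card (srelays \<sigma>2 s rid) \<and> rid \<notin> sacked \<sigma>2 s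
          then \<sigma>2\<lparr>sacked := (sacked \<sigma>2)(s := insert rid (sacked \<sigma>2 s)),
                   net := net \<sigma>2 + {#(s, fst rid, ReadAck (stag \<sigma>2 s) (sval \<sigma>2 s) rid s)#}\<rparr>
          else \<sigma>2) \<rbrakk> \<Longrightarrow>
    step W R S \<sigma> (Dlv (src, s, ReadRelay t v rid s') None)
      (\<sigma>3\<lparr>net := net \<sigma>3 - {#(src, s, ReadRelay t v rid s')#}\<rparr>)"
| wr_dack_ignore: "\<lbrakk> (src, w, DiscoverAck t v k s) \<in># net \<sigma>; w \<notin> crashed \<sigma>; w \<in> W;
    \<not> (\<exists>x A. wph \<sigma> w = WDisc x A \<and> k = wop \<sigma> w) \<rbrakk> \<Longrightarrow>
    step W R S \<sigma> (Dlv (src, w, DiscoverAck t v k s) None)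
      (\<sigma>\<lparr>net := net \<sigma> - {#(src, w, DiscoverAck t v k s)#}\<rparr>)"
| wr_dack_wait: "\<lbrakk> (src, w, DiscoverAck t v k s) \<in># net \<sigma>; w \<notin> crashed \<sigma>; w \<in> W;
    wph \<sigma> w = WDisc x A; k = wop \<sigma> w; A' = A(s \<mapsto> t); card (dom A') < quorum S \<rbrakk> \<Longrightarrow>
    step W R S \<sigma> (Dlv (src, w, DiscoverAck t v k s) None)
      (\<sigma>\<lparr>wph := (wph \<sigma>)(w := WDisc x A'),
         net := net \<sigma> - {#(src, w, DiscoverAck t v k s)#}\<rparr>)"
| wr_dack_done: "\<lbrakk> (src, w, DiscoverAck t v k s) \<in># net \<sigma>; w \<notin> crashed \<sigma>; w \<in> W;
    wph \<sigma> w = WDisc x A; k = wop \<sigma> w; A' = A(s \<mapsto> t); quorum S \<le> card (dom A');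
    maxTS = Max (fst ` ran A'); k' = Suc k \<rbrakk> \<Longrightarrow>
    step W R S \<sigma> (Dlv (src, w, DiscoverAck t v k s) None)
      (\<sigma>\<lparr>wop := (wop \<sigma>)(w := k'), wph := (wph \<sigma>)(w := WWrite {}),
         net := net \<sigma> - {#(src, w, DiscoverAck t v k s)#}
                + bcast S w (WriteRequest (Suc maxTS, w) (Some x) k' w)\<rparr>)"
| wr_wack_ignore: "\<lbrakk> (src, w, WriteAck t v k s) \<in># net \<sigma>; w \<notin> crashed \<sigma>; w \<in> W;
    \<not> (\<exists>A. wph \<sigma> w = WWrite A \<and> k = wop \<sigma> w) \<rbrakk> \<Longrightarrow>
    step W R S \<sigma> (Dlv (src, w, WriteAck t v k s) None)
      (\<sigma>\<lparr>net := net \<sigma> - {#(src, w, WriteAck t v k s)#}\<rparr>)"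
| wr_wack_wait: "\<lbrakk> (src, w, WriteAck t v k s) \<in># net \<sigma>; w \<notin> crashed \<sigma>; w \<in> W;
    wph \<sigma> w = WWrite A; k = wop \<sigma> w; A' = insert s A; card A' < quorum S \<rbrakk> \<Longrightarrow>
    step W R S \<sigma> (Dlv (src, w, WriteAck t v k s) None)
      (\<sigma>\<lparr>wph := (wph \<sigma>)(w := WWrite A'),
         net := net \<sigma> - {#(src, w, WriteAck t v k s)#}\<rparr>)"
| wr_wack_done: "\<lbrakk> (src, w, WriteAck t v k s) \<in># net \<sigma>; w \<notin> crashed \<sigma>; w \<in> W;
    wph \<sigma> w = WWrite A; k = wop \<sigma> w; A' = insert s A; quorum S \<le> card A' \<rbrakk> \<Longrightarrow>
    step W R S \<sigma> (Dlv (src, w, WriteAck t v k s) (Some WResp))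
      (\<sigma>\<lparr>wph := (wph \<sigma>)(w := WIdle),
         net := net \<sigma> - {#(src, w, WriteAck t v k s)#}\<rparr>)"
| rd_ack_ignore: "\<lbrakk> (src, r, ReadAck t v rid s) \<in># net \<sigma>; r \<notin> crashed \<sigma>; r \<in> R;
    \<not> (\<exists>A. rph \<sigma> r = RWait A \<and> rid = (r, rop \<sigma> r)) \<rbrakk> \<Longrightarrow>
    step W R S \<sigma> (Dlv (src, r, ReadAck t v rid s) None)
      (\<sigma>\<lparr>net := net \<sigma> - {#(src, r, ReadAck t v rid s)#}\<rparr>)"
| rd_ack_wait: "\<lbrakk> (src, r, ReadAck t v rid s) \<in># net \<sigma>; r \<notin> crashed \<sigma>; r \<in> R;
    rph \<sigma> r = RWait A; rid = (r, rop \<sigma> r); A' = A(s \<mapsto> (t, v)); card (dom A') < quorum S \<rbrakk> \<Longrightarrow>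
    step W R S \<sigma> (Dlv (src, r, ReadAck t v rid s) None)
      (\<sigma>\<lparr>rph := (rph \<sigma>)(r := RWait A'),
         net := net \<sigma> - {#(src, r, ReadAck t v rid s)#}\<rparr>)"
| rd_ack_done: "\<lbrakk> (src, r, ReadAck t v rid s) \<in># net \<sigma>; r \<notin> crashed \<sigma>; r \<in> R;
    rph \<sigma> r = RWait A; rid = (r, rop \<sigma> r); A' = A(s \<mapsto> (t, v)); quorum S \<le> card (dom A');
    (tmin, u) \<in> ran A'; tmin = Min (fst ` ran A') \<rbrakk> \<Longrightarrow>
    step W R S \<sigma> (Dlv (src, r, ReadAck t v rid s) (Some (RResp u)))
      (\<sigma>\<lparr>rph := (rph \<sigma>)(r := RIdle),
         net := net \<sigma> - {#(src, r, ReadAck t v rid s)#}\<rparr>)"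
  \<comment> \<open>a message not meant for the role of its receiver is discarded (never happens in Oh-MAM)\<close>
| unhandled: "\<lbrakk> (src, p, m) \<in># net \<sigma>; p \<notin> crashed \<sigma>; \<not> handled W R S p m \<rbrakk> \<Longrightarrow>
    step W R S \<sigma> (Dlv (src, p, m) None)
      (\<sigma>\<lparr>net := net \<sigma> - {#(src, p, m)#}\<rparr>)"

text \<open>An execution is an infinite sequence of states and step labels (finite executions are
represented by continuing with Idle steps); at most f servers crash.\<close>
definition execution :: "'p set \<Rightarrow> 'p set \<Rightarrow> 'p set \<Rightarrow> nat
    \<Rightarrow> (nat \<Rightarrow> ('p::linorder,'v) gstate) \<Rightarrow> (nat \<Rightarrow> ('p,'v) label) \<Rightarrow> bool" where
  "execution W R S f \<sigma>s ls \<longleftrightarrow>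
     \<sigma>s 0 = init_state \<and> (\<forall>i. step W R S (\<sigma>s i) (ls i) (\<sigma>s (Suc i)))
     \<and> (\<forall>i. card (crashed (\<sigma>s i) \<inter> S) \<le> f)"

definition correct :: "(nat \<Rightarrow> ('p,'v) gstate) \<Rightarrow> 'p \<Rightarrow> bool" where
  "correct \<sigma>s p \<longleftrightarrow> (\<forall>i. p \<notin> crashed (\<sigma>s i))"

definition fair :: "(nat \<Rightarrow> ('p,'v) gstate) \<Rightarrow> (nat \<Rightarrow> ('p,'v) label) \<Rightarrow> bool" where
  "fair \<sigma>s ls \<longleftrightarrow> (\<forall>i src dst m. (src, dst, m) \<in># net (\<sigma>s i) \<and> correct \<sigma>s dst
       \<longrightarrow> (\<exists>j\<ge>i. \<exists>r. ls j = Dlv (src, dst, m) r))"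

text \<open>An operation is identified by the time i of its invocation step.\<close>
definition is_op :: "(nat \<Rightarrow> ('p,'v) label) \<Rightarrow> nat \<Rightarrow> bool" where
  "is_op ls i \<longleftrightarrow> (\<exists>p k. ls i = Inv p k)"

definition op_proc :: "(nat \<Rightarrow> ('p,'v) label) \<Rightarrow> nat \<Rightarrow> 'p" where
  "op_proc ls i = (case ls i of Inv p _ \<Rightarrow> p)"

definition is_write :: "(nat \<Rightarrow> ('p,'v) label) \<Rightarrow> nat \<Rightarrow> bool" where
  "is_write ls i \<longleftrightarrow> (\<exists>p v. ls i = Inv p (OWrite v))"

definition is_read :: "(nat \<Rightarrow> ('p,'v) label) \<Rightarrow> nat \<Rightarrow> bool" where
  "is_read ls i \<longleftrightarrow> (\<exists>p. ls i = Inv p ORead)"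

definition write_val :: "(nat \<Rightarrow> ('p,'v) label) \<Rightarrow> nat \<Rightarrow> 'v" where
  "write_val ls i = (case ls i of Inv _ (OWrite v) \<Rightarrow> v)"

definition resp_by :: "(nat \<Rightarrow> ('p,'v) label) \<Rightarrow> nat \<Rightarrow> 'p \<Rightarrow> 'v resp \<Rightarrow> bool" where
  "resp_by ls j p r \<longleftrightarrow> (\<exists>src m. ls j = Dlv (src, p, m) (Some r))"

definition completes :: "(nat \<Rightarrow> ('p,'v) label) \<Rightarrow> nat \<Rightarrow> nat \<Rightarrow> 'v resp \<Rightarrow> bool" where
  "completes ls i j r \<longleftrightarrow> is_op ls i \<and> i < j \<and> resp_by ls j (op_proc ls i) r
     \<and> (\<forall>k r'. i < k \<and> k < j \<longrightarrow> \<not> resp_by ls k (op_proc ls i) r')"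

definition termination_prop :: "'p set \<Rightarrow> 'p set \<Rightarrow> 'p::linorder set \<Rightarrow> nat \<Rightarrow> 'v itself \<Rightarrow> bool" where
  "termination_prop W R S f _ \<longleftrightarrow>
    (\<forall>(\<sigma>s :: nat \<Rightarrow> ('p,'v) gstate) ls. execution W R S f \<sigma>s ls \<and> fair \<sigma>s ls \<longrightarrow>
       (\<forall>i. is_op ls i \<and> correct \<sigma>s (op_proc ls i) \<longrightarrow> (\<exists>j r. completes ls i j r)))"

definition atomicity_prop :: "'p set \<Rightarrow> 'p set \<Rightarrow> 'p::linorder set \<Rightarrow> nat \<Rightarrow> 'v itself \<Rightarrow> bool" where
  "atomicity_prop W R S f _ \<longleftrightarrow>
    (\<forall>(\<sigma>s :: nat \<Rightarrow> ('p,'v) gstate) ls. execution W R S f \<sigma>s ls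
       \<and> (\<forall>i. is_op ls i \<longrightarrow> (\<exists>j r. completes ls i j r)) \<longrightarrow>
       (\<exists>prec :: nat \<Rightarrow> nat \<Rightarrow> bool.
          \<comment> \<open>strict partial order on operations\<close>
          (\<forall>a b. prec a b \<longrightarrow> is_op ls a \<and> is_op ls b)
        \<and> (\<forall>a. \<not> prec a a)
        \<and> (\<forall>a b c. prec a b \<and> prec b c \<longrightarrow> prec a c)
          \<comment> \<open>P1\<close>
        \<and> (\<forall>a b j r. completes ls a j r \<and> is_op ls b \<and> j < b \<longrightarrow> \<not> prec b a)
          \<comment> \<open>P2\<close>
        \<and> (\<forall>a b. is_write ls a \<and> is_write ls b \<and> a \<noteq> b \<longrightarrow> prec a b \<or> prec b a)
        \<and> (\<forall>a b. is_read ls a \<and> is_write ls b \<longrightarrow> prec a b \<or> prec b a)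
          \<comment> \<open>P3\<close>
        \<and> (\<forall>a j u. is_read ls a \<and> completes ls a j (RResp u) \<longrightarrow>
             (\<exists>b. is_write ls b \<and> prec b a
                  \<and> (\<forall>c. is_write ls c \<and> prec c a \<longrightarrow> c = b \<or> prec c b)
                  \<and> u = Some (write_val ls b))
           \<or> ((\<forall>b. is_write ls b \<longrightarrow> \<not> prec b a) \<and> u = None))))"

end

theory Submission
  imports Defs
begin

text \<open>Order the operations by tags: a write by the tag it issues, a read by the minimum tag
  among the acknowledgements it returns, a write before a read carrying the same tag.
  When an operation completes, its tag is held by a majority of servers.  By majority
  intersection every later discover phase meets such a server, so a later write issues a
  strictly larger tag; and every later read is acknowledged only by servers that have
  collected relays from a majority, hence hold at least that tag.  A history variable
  recording the pairs issued by writers shows that reads return the value of the write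
  with the same tag (or the initial value).  For termination, reliable channels and the
  majority of correct servers make every phase eventually collect a majority of
  acknowledgements.\<close>

lemma mem_bcast [simp]: "finite S \<Longrightarrow> x \<in># bcast S src m \<longleftrightarrow> (\<exists>s\<in>S. x = (src, s, m))"
  by (auto simp: bcast_def)

lemma mem_diff_single_neq: "x \<noteq> y \<Longrightarrow> x \<in># M - {#y#} \<longleftrightarrow> x \<in># M"
  by (auto simp: in_diff_count)

lemma quorums_intersect:
  assumes "finite S" "A \<subseteq> S" "B \<subseteq> S" "quorum S \<le> card A" "quorum S \<le> card B"
  shows "A \<inter> B \<noteq> {}"
proof
  assume disjoint: "A \<inter> B = {}"
  have "finite A" "finite B" using assms finite_subset by auto
  then have "card A + card B = card (A \<union> B)" using disjoint by (simp add: card_Un_disjoint)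
  also have "\<dots> \<le> card S" using assms by (intro card_mono) auto
  finally show False using assms(4,5) unfolding quorum_def by linarith
qed

lemma tag_le_imp_fst_le: "(x::nat \<times> 'a::linorder) \<le> y \<Longrightarrow> fst x \<le> fst y"
  by (cases x; cases y) auto

lemma fst_less_imp_tag_less: "fst (x::nat \<times> 'a::linorder) < fst y \<Longrightarrow> x < y"
  by (cases x; cases y) auto

lemma growing_sets_cannot_stay_small:
  fixes D :: "nat \<Rightarrow> 'a set"
  assumes mono: "\<And>c. c0 \<le> c \<Longrightarrow> D c \<subseteq> D (Suc c)" and fin: "\<And>c. finite (D c)"
    and C: "finite C" "q \<le> card C" "0 < q"
    and joins_small: "\<And>s. s \<in> C \<Longrightarrow> \<exists>j\<ge>c0. s \<in> D j \<and> card (D j) < q"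
  shows False
proof -
  obtain js where js: "\<And>s. s \<in> C \<Longrightarrow> c0 \<le> js s \<and> s \<in> D (js s) \<and> card (D (js s)) < q"
    using joins_small by metis
  have "C \<noteq> {}" using C by auto
  then have "Max (js ` C) \<in> js ` C" using C(1) by (intro Max_in) auto
  then obtain s0 where s0: "s0 \<in> C" "js s0 = Max (js ` C)" by auto
  have D_mono: "D (js s) \<subseteq> D (js s0)" if "s \<in> C" for s
    using lift_Suc_mono_le[of "\<lambda>n. D (js s + n)" 0 "js s0 - js s"] mono js[OF that] that s0 C(1)
    by (simp add: Max_ge)
  have "C \<subseteq> D (js s0)" using D_mono js by blast
  then have "card C \<le> card (D (js s0))" using fin by (rule card_mono[rotated])
  then show False using js[OF s0(1)] C(2) by simp
qed

section \<open>Well-formedness of reachable states\<close>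

definition "discovers_issued \<sigma> \<longleftrightarrow> (\<forall>src d k w. (src,d,Discover k w) \<in># net \<sigma> \<longrightarrow> k \<le> wop \<sigma> w)"
definition "discover_acks_issued S \<sigma> \<longleftrightarrow>
  (\<forall>src d t v k s. (src,d,DiscoverAck t v k s) \<in># net \<sigma> \<longrightarrow> s \<in> S \<and> k \<le> wop \<sigma> d)"
definition "write_requests_issued \<sigma> \<longleftrightarrow> (\<forall>src d t v k w. (src,d,WriteRequest t v k w) \<in># net \<sigma> \<longrightarrow> k \<le> wop \<sigma> w)"
definition "write_acks_issued S \<sigma> \<longleftrightarrow>
  (\<forall>src d t v k s. (src,d,WriteAck t v k s) \<in># net \<sigma> \<longrightarrow> s \<in> S \<and> k \<le> wop \<sigma> d)"
definition "read_requests_issued \<sigma> \<longleftrightarrow> (\<forall>src d rid. (src,d,ReadRequest rid) \<in># net \<sigma> \<longrightarrow> snd rid \<le> rop \<sigma> (fst rid))"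
definition "relays_issued S \<sigma> \<longleftrightarrow>
  (\<forall>src d t v rid s. (src,d,ReadRelay t v rid s) \<in># net \<sigma> \<longrightarrow> s \<in> S \<and> snd rid \<le> rop \<sigma> (fst rid))"
definition "read_acks_issued S \<sigma> \<longleftrightarrow>
  (\<forall>src d t v rid s. (src,d,ReadAck t v rid s) \<in># net \<sigma> \<longrightarrow> s \<in> S \<and> snd rid \<le> rop \<sigma> (fst rid))"
definition "relay_sets_issued S \<sigma> \<longleftrightarrow>
  (\<forall>s rid. srelays \<sigma> s rid \<subseteq> S \<and> (srelays \<sigma> s rid \<noteq> {} \<longrightarrow> snd rid \<le> rop \<sigma> (fst rid)))"
definition "discover_phase_servers S \<sigma> \<longleftrightarrow> (\<forall>w x A. wph \<sigma> w = WDisc x A \<longrightarrow> dom A \<subseteq> S)"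
definition "write_phase_servers S \<sigma> \<longleftrightarrow> (\<forall>w A. wph \<sigma> w = WWrite A \<longrightarrow> A \<subseteq> S)"
definition "read_phase_servers S \<sigma> \<longleftrightarrow> (\<forall>r A. rph \<sigma> r = RWait A \<longrightarrow> dom A \<subseteq> S)"
definition "server_wops_issued \<sigma> \<longleftrightarrow> (\<forall>s w. swops \<sigma> s w \<le> wop \<sigma> w)"

definition wf_state :: "'p set \<Rightarrow> ('p,'v) gstate \<Rightarrow> bool" where
  "wf_state S \<sigma> \<longleftrightarrow> discovers_issued \<sigma> \<and> discover_acks_issued S \<sigma> \<and> write_requests_issued \<sigma>
     \<and> write_acks_issued S \<sigma> \<and> read_requests_issued \<sigma> \<and> relays_issued S \<sigma> \<and> read_acks_issued S \<sigma>
     \<and> relay_sets_issued S \<sigma> \<and> discover_phase_servers S \<sigma> \<and> write_phase_servers S \<sigma>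
     \<and> read_phase_servers S \<sigma> \<and> server_wops_issued \<sigma>"

lemma wf_state_init: "wf_state S (init_state :: ('p::linorder,'v) gstate)"
  by (simp add: wf_state_def discovers_issued_def discover_acks_issued_def write_requests_issued_def
      write_acks_issued_def read_requests_issued_def relays_issued_def read_acks_issued_def
      relay_sets_issued_def discover_phase_servers_def write_phase_servers_def
      read_phase_servers_def server_wops_issued_def init_state_def)

lemmas stepE = step.cases[consumes 1]

context
  fixes W R S :: "'p::linorder set" and \<sigma> \<sigma>' :: "('p,'v) gstate" and l
  assumes step: "step W R S \<sigma> l \<sigma>'" and finS: "finite S"
begin

lemma discovers_issued_step: "discovers_issued \<sigma> \<Longrightarrow> discovers_issued \<sigma>'"
  unfolding discovers_issued_def
  using step finS by (elim stepE; auto split: if_splits dest!: in_diffD; (fastforce intro: le_SucI)?)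
lemma discover_acks_issued_step:
  "discovers_issued \<sigma> \<Longrightarrow> discover_acks_issued S \<sigma> \<Longrightarrow> discover_acks_issued S \<sigma>'"
  unfolding discovers_issued_def discover_acks_issued_def
  using step finS by (elim stepE; auto split: if_splits dest!: in_diffD; (fastforce intro: le_SucI)?)
lemma write_requests_issued_step: "write_requests_issued \<sigma> \<Longrightarrow> write_requests_issued \<sigma>'"
  unfolding write_requests_issued_def
  using step finS by (elim stepE; auto split: if_splits dest!: in_diffD; (fastforce intro: le_SucI)?)
lemma write_acks_issued_step:
  "write_requests_issued \<sigma> \<Longrightarrow> write_acks_issued S \<sigma> \<Longrightarrow> write_acks_issued S \<sigma>'"
  unfolding write_requests_issued_def write_acks_issued_def
  using step finS by (elim stepE; auto split: if_splits dest!: in_diffD; (fastforce intro: le_SucI)?)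
lemma read_requests_issued_step: "read_requests_issued \<sigma> \<Longrightarrow> read_requests_issued \<sigma>'"
  unfolding read_requests_issued_def
  using step finS by (elim stepE; auto split: if_splits dest!: in_diffD; (fastforce intro: le_SucI)?)
lemma relays_issued_step: "read_requests_issued \<sigma> \<Longrightarrow> relays_issued S \<sigma> \<Longrightarrow> relays_issued S \<sigma>'"
  unfolding read_requests_issued_def relays_issued_def
  using step finS by (elim stepE; auto split: if_splits dest!: in_diffD; (fastforce intro: le_SucI)?)
lemma read_acks_issued_step: "relays_issued S \<sigma> \<Longrightarrow> read_acks_issued S \<sigma> \<Longrightarrow> read_acks_issued S \<sigma>'"
  unfolding relays_issued_def read_acks_issued_def
  using step finS by (elim stepE; auto split: if_splits dest!: in_diffD; (fastforce intro: le_SucI)?)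
lemma relay_sets_issued_step: "relays_issued S \<sigma> \<Longrightarrow> relay_sets_issued S \<sigma> \<Longrightarrow> relay_sets_issued S \<sigma>'"
  unfolding relays_issued_def relay_sets_issued_def
  using step finS by (elim stepE; auto split: if_splits dest!: in_diffD; (fastforce intro: le_SucI)?)
lemma discover_phase_servers_step:
  "discover_acks_issued S \<sigma> \<Longrightarrow> discover_phase_servers S \<sigma> \<Longrightarrow> discover_phase_servers S \<sigma>'"
  unfolding discover_acks_issued_def discover_phase_servers_def
  using step finS by (elim stepE; auto split: if_splits dest!: in_diffD; (fastforce intro: le_SucI)?)
lemma write_phase_servers_step:
  "write_acks_issued S \<sigma> \<Longrightarrow> write_phase_servers S \<sigma> \<Longrightarrow> write_phase_servers S \<sigma>'"
  unfolding write_acks_issued_def write_phase_servers_def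
  using step finS by (elim stepE; auto split: if_splits dest!: in_diffD; (fastforce intro: le_SucI)?)
lemma read_phase_servers_step:
  "read_acks_issued S \<sigma> \<Longrightarrow> read_phase_servers S \<sigma> \<Longrightarrow> read_phase_servers S \<sigma>'"
  unfolding read_acks_issued_def read_phase_servers_def
  using step finS by (elim stepE; auto split: if_splits dest!: in_diffD; (fastforce intro: le_SucI)?)
lemma server_wops_issued_step: "write_requests_issued \<sigma> \<Longrightarrow> server_wops_issued \<sigma> \<Longrightarrow> server_wops_issued \<sigma>'"
  unfolding write_requests_issued_def server_wops_issued_def
  using step finS by (elim stepE; auto split: if_splits dest!: in_diffD; (fastforce intro: le_SucI)?)

lemma wf_state_step: "wf_state S \<sigma> \<Longrightarrow> wf_state S \<sigma>'"
  unfolding wf_state_def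
  by (meson discovers_issued_step discover_acks_issued_step write_requests_issued_step
      write_acks_issued_step read_requests_issued_step relays_issued_step read_acks_issued_step
      relay_sets_issued_step discover_phase_servers_step write_phase_servers_step
      read_phase_servers_step server_wops_issued_step)

end

context
  fixes W R S :: "'p::linorder set" and \<sigma> \<sigma>' :: "('p,'v) gstate" and l
  assumes step: "step W R S \<sigma> l \<sigma>'"
begin

lemma stag_step_mono: "stag \<sigma> s \<le> stag \<sigma>' s"
  using step by (elim stepE; auto)
lemma wop_step_mono: "wop \<sigma> w \<le> wop \<sigma>' w"
  using step by (elim stepE; auto)
lemma rop_step_mono: "rop \<sigma> r \<le> rop \<sigma>' r"
  using step by (elim stepE; auto)
lemma crashed_step_mono: "crashed \<sigma> \<subseteq> crashed \<sigma>'"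
  using step by (elim stepE; auto)
lemma srelays_step_mono: "srelays \<sigma> s rid \<subseteq> srelays \<sigma>' s rid"
  using step by (elim stepE; auto)

lemma swops_frame:
  "swops \<sigma>' = swops \<sigma> \<or> (\<exists>src s t v k w. l = Dlv (src,s,WriteRequest t v k w) None
     \<and> (src,s,WriteRequest t v k w) \<in># net \<sigma> \<and> stag \<sigma> s < t \<and> swops \<sigma> s w < k
     \<and> swops \<sigma>' = (swops \<sigma>)(s := (swops \<sigma> s)(w := k)) \<and> stag \<sigma>' s = t)"
  using step by (elim stepE; auto split: if_splits)

lemma srelays_frame:
  "srelays \<sigma>' = srelays \<sigma> \<or> (\<exists>src s t' v rid s'. l = Dlv (src, s, ReadRelay t' v rid s') None
     \<and> (src,s,ReadRelay t' v rid s') \<in># net \<sigma>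
     \<and> srelays \<sigma>' = (srelays \<sigma>)(s := (srelays \<sigma> s)(rid := insert s' (srelays \<sigma> s rid)))
     \<and> stag \<sigma>' s = max (stag \<sigma> s) t')"
  using step by (elim stepE; auto split: if_splits simp: max_def)

lemma discover_phase_step:
  "wph \<sigma> w = WDisc x A \<Longrightarrow> (\<exists>A'. wph \<sigma>' w = WDisc x A' \<and> wop \<sigma>' w = wop \<sigma> w)
     \<or> (\<exists>A'. wph \<sigma>' w = WWrite A' \<and> wop \<sigma>' w = Suc (wop \<sigma> w))"
  using step by (elim stepE; auto)

lemma write_phase_step:
  "wph \<sigma> w = WWrite A \<Longrightarrow> (\<exists>A'. wph \<sigma>' w = WWrite A' \<and> wop \<sigma>' w = wop \<sigma> w)
     \<or> (\<exists>src m. l = Dlv (src,w,m) (Some WResp))"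
  using step by (elim stepE; auto)

lemma read_phase_step:
  "rph \<sigma> r = RWait A \<Longrightarrow> (\<exists>A'. rph \<sigma>' r = RWait A' \<and> rop \<sigma>' r = rop \<sigma> r)
     \<or> (\<exists>src m u. l = Dlv (src,r,m) (Some (RResp u)))"
  using step by (elim stepE; auto)

lemma discover_acks_grow: "wph \<sigma> w = WDisc x A \<Longrightarrow> wph \<sigma>' w = WDisc x' A' \<Longrightarrow> dom A \<subseteq> dom A'"
  using step by (elim stepE; auto split: if_splits)

lemma write_acks_grow: "wph \<sigma> w = WWrite A \<Longrightarrow> wph \<sigma>' w = WWrite A' \<Longrightarrow> A \<subseteq> A'"
  using step by (elim stepE; auto split: if_splits)

lemma read_acks_grow: "rph \<sigma> r = RWait A \<Longrightarrow> rph \<sigma>' r = RWait A' \<Longrightarrow> dom A \<subseteq> dom A'"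
  using step by (elim stepE; auto split: if_splits)

lemma invocation_step:
  "l = Inv p k \<Longrightarrow>
   (\<exists>v. k = OWrite v \<and> p \<in> W \<and> wph \<sigma> p = WIdle \<and> wph \<sigma>' p = WDisc v Map.empty
      \<and> wop \<sigma>' p = Suc (wop \<sigma> p) \<and> net \<sigma>' = net \<sigma> + bcast S p (Discover (Suc (wop \<sigma> p)) p))
   \<or> (k = ORead \<and> p \<in> R \<and> rph \<sigma> p = RIdle \<and> rph \<sigma>' p = RWait Map.empty
      \<and> rop \<sigma>' p = Suc (rop \<sigma> p) \<and> net \<sigma>' = net \<sigma> + bcast S p (ReadRequest (p, Suc (rop \<sigma> p))))"
  using step by (elim stepE; auto)

lemma write_response_step:
  "l = Dlv (src,w,m) (Some rr) \<Longrightarrow> w \<notin> R \<Longrightarrow>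
   \<exists>t v k s A. m = WriteAck t v k s \<and> rr = WResp \<and> w \<in> W \<and> wph \<sigma> w = WWrite A \<and> k = wop \<sigma> w
     \<and> quorum S \<le> card (insert s A) \<and> (src,w,m) \<in># net \<sigma>"
  using step by (elim stepE; auto)

lemma read_response_step:
  "l = Dlv (src,r,m) (Some rr) \<Longrightarrow> r \<notin> W \<Longrightarrow>
   \<exists>t v s A u. m = ReadAck t v (r, rop \<sigma> r) s \<and> rr = RResp u \<and> r \<in> R \<and> rph \<sigma> r = RWait A
     \<and> quorum S \<le> card (dom (A(s \<mapsto> (t,v)))) \<and> (src,r,m) \<in># net \<sigma>
     \<and> (Min (fst ` ran (A(s \<mapsto> (t,v)))), u) \<in> ran (A(s \<mapsto> (t,v)))"
  using step by (elim stepE; auto)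

end

context
  fixes W R S :: "'p::linorder set" and \<sigma> \<sigma>' :: "('p,'v) gstate" and l
  assumes step: "step W R S \<sigma> l \<sigma>'" and finS: "finite S"
begin

lemma DiscoverAck_origin:
  assumes "(src,d,DiscoverAck t v k s) \<in># net \<sigma>'"
  shows "(src,d,DiscoverAck t v k s) \<in># net \<sigma> \<or> (\<exists>src'. l = Dlv (src', s, Discover k d) None
     \<and> (src', s, Discover k d) \<in># net \<sigma> \<and> t = stag \<sigma> s \<and> v = sval \<sigma> s)"
  using step assms finS by (elim stepE; auto split: if_splits dest: in_diffD)

lemma WriteAck_origin:
  assumes "(src,d,WriteAck t v k s) \<in># net \<sigma>'"
  shows "(src,d,WriteAck t v k s) \<in># net \<sigma> \<or> (\<exists>src' t0 v0. l = Dlv (src', s, WriteRequest t0 v0 k d) None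
     \<and> (src', s, WriteRequest t0 v0 k d) \<in># net \<sigma> \<and> t = stag \<sigma>' s
     \<and> ((stag \<sigma> s < t0 \<and> swops \<sigma> s d < k \<and> t = t0) \<or> (\<not> (stag \<sigma> s < t0 \<and> swops \<sigma> s d < k) \<and> t = stag \<sigma> s)))"
  using step assms finS by (elim stepE; auto split: if_splits dest: in_diffD)

lemma ReadRelay_origin:
  assumes "(src,d,ReadRelay t v rid s) \<in># net \<sigma>'"
  shows "(src,d,ReadRelay t v rid s) \<in># net \<sigma> \<or> (\<exists>src'. l = Dlv (src', s, ReadRequest rid) None
     \<and> (src', s, ReadRequest rid) \<in># net \<sigma> \<and> t = stag \<sigma> s \<and> v = sval \<sigma> s)"
  using step assms finS by (elim stepE; auto split: if_splits dest: in_diffD)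

lemma ReadAck_origin:
  assumes "(src,d,ReadAck t v rid s) \<in># net \<sigma>'"
  shows "(src,d,ReadAck t v rid s) \<in># net \<sigma> \<or>
    (t = stag \<sigma>' s \<and> v = sval \<sigma>' s \<and> quorum S \<le> card (srelays \<sigma>' s rid))"
  using step assms finS by (elim stepE; auto split: if_splits dest: in_diffD)

end

section \<open>The tags issued by writers\<close>

text \<open>A history variable: I w k is the tag/value pair that writer w broadcasts in the write
  phase it runs with counter k, i.e.\ right after a discover phase run with counter k - 1.\<close>

type_synonym ('p,'v) issue_map = "'p \<Rightarrow> nat \<Rightarrow> ('p tag \<times> 'v option) option"

definition record_issue :: "'p set \<Rightarrow> 'p set \<Rightarrow> ('p,'v) gstate \<Rightarrow> ('p,'v) label
    \<Rightarrow> ('p,'v) issue_map \<Rightarrow> ('p,'v) issue_map" where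
 "record_issue W S \<sigma> l I = (case l of
    Dlv (src, w, DiscoverAck t v k s) None \<Rightarrow> (case wph \<sigma> w of
       WDisc x A \<Rightarrow> if w \<in> W \<and> k = wop \<sigma> w \<and> quorum S \<le> card (dom (A(s \<mapsto> t)))
         then I(w := (I w)(Suc k := Some ((Suc (Max (fst ` ran (A(s \<mapsto> t)))), w), Some x)))
         else I
     | _ \<Rightarrow> I)
  | _ \<Rightarrow> I)"

definition valid_pair :: "('p,'v) issue_map \<Rightarrow> 'p tag \<Rightarrow> 'v option \<Rightarrow> bool" where
  "valid_pair I t v \<longleftrightarrow> (fst t = 0 \<and> v = None) \<or> (\<exists>k. I (snd t) k = Some (t, v))"

definition "issues_bounded I \<sigma> \<longleftrightarrow> (\<forall>w. I w 0 = None \<and> (\<forall>k. I w k \<noteq> None \<longrightarrow> k \<le> wop \<sigma> w))"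
definition "issued_tags_wf I \<longleftrightarrow>
  (\<forall>w k t v. I w k = Some (t,v) \<longrightarrow> snd t = w \<and> 0 < fst t \<and> v \<noteq> None)"
definition "server_pairs_valid I \<sigma> \<longleftrightarrow> (\<forall>s. valid_pair I (stag \<sigma> s) (sval \<sigma> s))"
definition "write_requests_carry_issued I \<sigma> \<longleftrightarrow>
  (\<forall>src d t v k w. (src,d,WriteRequest t v k w) \<in># net \<sigma> \<longrightarrow> I w k = Some (t,v))"
definition "write_acks_cover_issued I \<sigma> \<longleftrightarrow>
  (\<forall>src d t v k s. (src,d,WriteAck t v k s) \<in># net \<sigma> \<longrightarrow> k = wop \<sigma> d \<longrightarrow>
     (\<exists>t' v'. I d k = Some (t',v') \<and> t' \<le> stag \<sigma> s))"
definition "server_wops_cover_issued I \<sigma> \<longleftrightarrow>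
  (\<forall>s w. 0 < swops \<sigma> s w \<longrightarrow> (\<exists>t v. I w (swops \<sigma> s w) = Some (t,v) \<and> t \<le> stag \<sigma> s))"
definition "write_phase_covers_issued I \<sigma> \<longleftrightarrow>
  (\<forall>w A. wph \<sigma> w = WWrite A \<longrightarrow> (\<exists>t v. I w (wop \<sigma> w) = Some (t,v) \<and> (\<forall>s\<in>A. t \<le> stag \<sigma> s)))"
definition "relays_valid I \<sigma> \<longleftrightarrow> (\<forall>src d t v rid s. (src,d,ReadRelay t v rid s) \<in># net \<sigma> \<longrightarrow> valid_pair I t v)"
definition "read_acks_valid I \<sigma> \<longleftrightarrow>
  (\<forall>src d t v rid s. (src,d,ReadAck t v rid s) \<in># net \<sigma> \<longrightarrow> valid_pair I t v \<and> t \<le> stag \<sigma> s)"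
definition "read_phase_valid I \<sigma> \<longleftrightarrow>
  (\<forall>r A s t v. rph \<sigma> r = RWait A \<longrightarrow> A s = Some (t,v) \<longrightarrow> valid_pair I t v \<and> t \<le> stag \<sigma> s)"

definition issue_inv :: "('p::linorder,'v) issue_map \<Rightarrow> ('p,'v) gstate \<Rightarrow> bool" where
  "issue_inv I \<sigma> \<longleftrightarrow> issues_bounded I \<sigma> \<and> issued_tags_wf I \<and> server_pairs_valid I \<sigma>
     \<and> write_requests_carry_issued I \<sigma> \<and> write_acks_cover_issued I \<sigma> \<and> server_wops_cover_issued I \<sigma>
     \<and> write_phase_covers_issued I \<sigma> \<and> relays_valid I \<sigma> \<and> read_acks_valid I \<sigma> \<and> read_phase_valid I \<sigma>"

lemma issue_inv_init: "issue_inv (\<lambda>_ _. None) (init_state :: ('p::linorder,'v) gstate)"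
  by (simp add: issue_inv_def issues_bounded_def issued_tags_wf_def server_pairs_valid_def
      write_requests_carry_issued_def write_acks_cover_issued_def server_wops_cover_issued_def
      write_phase_covers_issued_def relays_valid_def read_acks_valid_def read_phase_valid_def
      init_state_def valid_pair_def)

lemma record_issue_completed_discover:
  "wph \<sigma> w = WDisc x A \<Longrightarrow> w \<in> W \<Longrightarrow> quorum S \<le> card (dom (A(s\<mapsto>t))) \<Longrightarrow>
   record_issue W S \<sigma> (Dlv (src,w,DiscoverAck t v (wop \<sigma> w) s) None) I =
     I(w := (I w)(Suc (wop \<sigma> w) := Some ((Suc (Max (fst ` ran (A(s\<mapsto>t)))), w), Some x)))"
  by (simp add: record_issue_def)

lemma record_issue_new:
  assumes "record_issue W S \<sigma> l I w k = Some (t,v)" "I w k \<noteq> Some (t,v)"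
  obtains src t0 v0 s0 x A where "l = Dlv (src, w, DiscoverAck t0 v0 (wop \<sigma> w) s0) None"
    "wph \<sigma> w = WDisc x A" "k = Suc (wop \<sigma> w)" "w \<in> W" "quorum S \<le> card (dom (A(s0 \<mapsto> t0)))"
    "t = (Suc (Max (fst ` ran (A(s0 \<mapsto> t0)))), w)" "v = Some x"
  using assms
  by (auto simp: record_issue_def split: label.splits option.splits msg.splits wphase.splits if_splits)

declare split_paired_All[simp del] split_paired_Ex[simp del]

context
  fixes W R S :: "'p::linorder set" and \<sigma> \<sigma>' :: "('p,'v) gstate" and l and I :: "('p,'v) issue_map"
  assumes step: "step W R S \<sigma> l \<sigma>'" and finS: "finite S"
begin

lemma record_issue_keeps:
  assumes "issues_bounded I \<sigma>" "I w k = Some p"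
  shows "(record_issue W S \<sigma> l I) w k = Some p"
proof -
  have "k \<le> wop \<sigma> w" using assms unfolding issues_bounded_def by (metis option.simps(3))
  with step show ?thesis using assms(2)
    by (cases rule: step.cases) (auto simp: record_issue_def handled_def split: wphase.splits msg.splits)
qed

lemma valid_pair_record_issue: "issues_bounded I \<sigma> \<Longrightarrow> valid_pair I t v \<Longrightarrow> valid_pair (record_issue W S \<sigma> l I) t v"
  unfolding valid_pair_def using record_issue_keeps by blast

lemma issues_bounded_step: "issues_bounded I \<sigma> \<Longrightarrow> issues_bounded (record_issue W S \<sigma> l I) \<sigma>'"
  unfolding issues_bounded_def using step
  by (elim stepE; auto simp: record_issue_def handled_def split: wphase.splits if_splits msg.splits;
      (fastforce intro: le_SucI)?)

lemma issued_tags_wf_step: "issued_tags_wf I \<Longrightarrow> issued_tags_wf (record_issue W S \<sigma> l I)"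
  unfolding issued_tags_wf_def using step
  by (elim stepE; auto simp: record_issue_def handled_def split: wphase.splits if_splits msg.splits)

lemma server_pairs_valid_step:
  assumes keep: "\<And>t v. valid_pair I t v \<Longrightarrow> valid_pair (record_issue W S \<sigma> l I) t v"
    and "issued_tags_wf I" "server_pairs_valid I \<sigma>" "write_requests_carry_issued I \<sigma>" "relays_valid I \<sigma>"
  shows "server_pairs_valid (record_issue W S \<sigma> l I) \<sigma>'"
  using step
proof (cases rule: step.cases)
  case (srv_write src s t v k w \<sigma>1)
  have "I w k = Some (t, v)" using assms(4) srv_write unfolding write_requests_carry_issued_def by blast
  with assms(2) have "valid_pair I t v" unfolding valid_pair_def issued_tags_wf_def by metis
  then show ?thesis using srv_write assms(3) keep unfolding server_pairs_valid_def by auto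
next
  case (srv_relay src s t v rid s' \<sigma>1 \<sigma>2 \<sigma>3)
  have "valid_pair I t v" using assms(5) srv_relay unfolding relays_valid_def by blast
  then show ?thesis using srv_relay assms(3) keep unfolding server_pairs_valid_def by auto
qed (use assms(3) keep in \<open>auto simp: server_pairs_valid_def\<close>)

lemma write_requests_carry_issued_step:
  assumes keep: "\<And>w k p. I w k = Some p \<Longrightarrow> (record_issue W S \<sigma> l I) w k = Some p"
    and "write_requests_carry_issued I \<sigma>" "write_requests_issued \<sigma>"
  shows "write_requests_carry_issued (record_issue W S \<sigma> l I) \<sigma>'"
  using step
proof (cases rule: step.cases)
  case (wr_dack_done src w t v k s x A A' maxTS k')
  then show ?thesis using assms finS unfolding write_requests_carry_issued_def write_requests_issued_def
    by (auto simp: record_issue_completed_discover dest!: in_diffD; metis Suc_n_not_le_n)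
qed (use assms finS in \<open>auto simp: write_requests_carry_issued_def split: if_splits dest!: in_diffD\<close>)

lemma write_acks_cover_issued_step:
  assumes keep: "\<And>w k p. I w k = Some p \<Longrightarrow> (record_issue W S \<sigma> l I) w k = Some p" and wf: "wf_state S \<sigma>"
    and "issues_bounded I \<sigma>" "write_requests_carry_issued I \<sigma>" "write_acks_cover_issued I \<sigma>"
    "server_wops_cover_issued I \<sigma>"
  shows "write_acks_cover_issued (record_issue W S \<sigma> l I) \<sigma>'"
  unfolding write_acks_cover_issued_def
proof (intro allI impI)
  fix src d t v k s
  assume m: "(src, d, WriteAck t v k s) \<in># net \<sigma>'" and k: "k = wop \<sigma>' d"
  have sm: "stag \<sigma> s \<le> stag \<sigma>' s" using step by (rule stag_step_mono)
  from WriteAck_origin[OF step finS m]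
  show "\<exists>t' v'. (record_issue W S \<sigma> l I) d k = Some (t', v') \<and> t' \<le> stag \<sigma>' s"
  proof
    assume old: "(src, d, WriteAck t v k s) \<in># net \<sigma>"
    with wf have "k \<le> wop \<sigma> d" unfolding wf_state_def write_acks_issued_def by blast
    with wop_step_mono[OF step, of d] k have "k = wop \<sigma> d" by simp
    then obtain t' v' where "I d k = Some (t',v')" "t' \<le> stag \<sigma> s"
      using assms(5) old unfolding write_acks_cover_issued_def by blast
    then show ?thesis using keep sm order_trans by blast
  next
    assume "\<exists>src' t0 v0. l = Dlv (src', s, WriteRequest t0 v0 k d) None
     \<and> (src', s, WriteRequest t0 v0 k d) \<in># net \<sigma> \<and> t = stag \<sigma>' s
     \<and> ((stag \<sigma> s < t0 \<and> swops \<sigma> s d < k \<and> t = t0) \<or> (\<not> (stag \<sigma> s < t0 \<and> swops \<sigma> s d < k) \<and> t = stag \<sigma> s))"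
    then obtain src' t0 v0 where l: "l = Dlv (src', s, WriteRequest t0 v0 k d) None"
      and req: "(src', s, WriteRequest t0 v0 k d) \<in># net \<sigma>" and t: "t = stag \<sigma>' s"
      and c: "(stag \<sigma> s < t0 \<and> swops \<sigma> s d < k \<and> t = t0) \<or> (\<not> (stag \<sigma> s < t0 \<and> swops \<sigma> s d < k) \<and> t = stag \<sigma> s)"
      by blast
    have issued: "I d k = Some (t0, v0)" using assms(4) req unfolding write_requests_carry_issued_def by blast
    have "wop \<sigma>' d = wop \<sigma> d" using step l by (cases rule: step.cases) auto
    then have "swops \<sigma> s d \<le> k" using wf k unfolding wf_state_def server_wops_issued_def by auto
    moreover have "0 < k" using assms(3) issued unfolding issues_bounded_def by (metis gr0I option.simps(3))
    ultimately have "t0 \<le> stag \<sigma> s" if "\<not> (stag \<sigma> s < t0 \<and> swops \<sigma> s d < k)" "stag \<sigma> s < t0"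
    proof -
      from that have "swops \<sigma> s d = k" using \<open>swops \<sigma> s d \<le> k\<close> by auto
      with \<open>0 < k\<close> obtain t' v' where "I d k = Some (t',v')" "t' \<le> stag \<sigma> s"
        using assms(6) unfolding server_wops_cover_issued_def by metis
      then show ?thesis using issued by simp
    qed
    then have "t0 \<le> t" using c by force
    then show ?thesis using issued keep t by blast
  qed
qed

lemma server_wops_cover_issued_step:
  assumes keep: "\<And>w k p. I w k = Some p \<Longrightarrow> (record_issue W S \<sigma> l I) w k = Some p"
    and "write_requests_carry_issued I \<sigma>" "server_wops_cover_issued I \<sigma>"
  shows "server_wops_cover_issued (record_issue W S \<sigma> l I) \<sigma>'"
  unfolding server_wops_cover_issued_def
proof (intro allI impI)
  fix s w assume pos: "0 < swops \<sigma>' s w"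
  have sm: "\<And>s. stag \<sigma> s \<le> stag \<sigma>' s" using step by (rule stag_step_mono)
  have old: "\<exists>t v. (record_issue W S \<sigma> l I) w (swops \<sigma> s w) = Some (t, v) \<and> t \<le> stag \<sigma>' s" if "0 < swops \<sigma> s w"
    using assms(3) that keep sm order_trans unfolding server_wops_cover_issued_def by meson
  from swops_frame[OF step]
  show "\<exists>t v. (record_issue W S \<sigma> l I) w (swops \<sigma>' s w) = Some (t, v) \<and> t \<le> stag \<sigma>' s"
  proof
    assume "swops \<sigma>' = swops \<sigma>" then show ?thesis using old pos by simp
  next
    assume "\<exists>src s t v k w. l = Dlv (src,s,WriteRequest t v k w) None
      \<and> (src,s,WriteRequest t v k w) \<in># net \<sigma> \<and> stag \<sigma> s < t \<and> swops \<sigma> s w < k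
      \<and> swops \<sigma>' = (swops \<sigma>)(s := (swops \<sigma> s)(w := k)) \<and> stag \<sigma>' s = t"
    then obtain src s0 t v k w0 where h: "(src,s0,WriteRequest t v k w0) \<in># net \<sigma>"
      "swops \<sigma>' = (swops \<sigma>)(s0 := (swops \<sigma> s0)(w0 := k))" "stag \<sigma>' s0 = t" by blast
    have "I w0 k = Some (t, v)" using assms(2) h(1) unfolding write_requests_carry_issued_def by blast
    then show ?thesis using h keep old pos by (cases "s = s0 \<and> w = w0") auto
  qed
qed

lemma write_phase_covers_issued_step:
  assumes keep: "\<And>w k p. I w k = Some p \<Longrightarrow> (record_issue W S \<sigma> l I) w k = Some p"
    and "write_acks_cover_issued I \<sigma>" "write_phase_covers_issued I \<sigma>"
  shows "write_phase_covers_issued (record_issue W S \<sigma> l I) \<sigma>'"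
proof -
  have sm: "\<And>s. stag \<sigma> s \<le> stag \<sigma>' s" using step by (rule stag_step_mono)
  have old: "\<exists>t v. (record_issue W S \<sigma> l I) w (wop \<sigma> w) = Some (t, v) \<and> (\<forall>s\<in>A. t \<le> stag \<sigma>' s)"
    if "wph \<sigma> w = WWrite A" for w A
    using assms(3) that keep sm order_trans unfolding write_phase_covers_issued_def by meson
  show ?thesis unfolding write_phase_covers_issued_def
  proof (intro allI impI)
    fix w A assume A: "wph \<sigma>' w = WWrite A"
    show "\<exists>t v. (record_issue W S \<sigma> l I) w (wop \<sigma>' w) = Some (t, v) \<and> (\<forall>s\<in>A. t \<le> stag \<sigma>' s)"
    proof (cases "wph \<sigma>' w = wph \<sigma> w \<and> wop \<sigma>' w = wop \<sigma> w")
      case True then show ?thesis using old A by simp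
    next
      case False
      from step this A show ?thesis
      proof (cases rule: step.cases)
        case (wr_dack_done src w t v k s x A A' maxTS k')
        then show ?thesis using False A by (auto simp: record_issue_completed_discover)
      next
        case (wr_wack_wait src w0 t v k s A0 A')
        have w: "w = w0" using wr_wack_wait False by (auto split: if_splits)
        obtain t' v' where t': "I w k = Some (t',v')" "t' \<le> stag \<sigma> s"
          using assms(2) wr_wack_wait unfolding w write_acks_cover_issued_def by blast
        obtain t'' v'' where "(record_issue W S \<sigma> l I) w (wop \<sigma> w) = Some (t'', v'')" "\<forall>s\<in>A0. t'' \<le> stag \<sigma>' s"
          using old wr_wack_wait unfolding w by blast
        then show ?thesis using wr_wack_wait A keep[OF t'(1)] t'(2) sm[of s] unfolding w by auto
      qed (auto split: if_splits)
    qed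
  qed
qed

lemma relays_valid_step:
  assumes keep: "\<And>t v. valid_pair I t v \<Longrightarrow> valid_pair (record_issue W S \<sigma> l I) t v"
    and "server_pairs_valid I \<sigma>" "relays_valid I \<sigma>"
  shows "relays_valid (record_issue W S \<sigma> l I) \<sigma>'"
  unfolding relays_valid_def
proof (intro allI impI)
  fix src d t v rid s assume "(src, d, ReadRelay t v rid s) \<in># net \<sigma>'"
  from ReadRelay_origin[OF step finS this] have "valid_pair I t v"
    using assms(2,3) unfolding server_pairs_valid_def relays_valid_def by blast
  then show "valid_pair (record_issue W S \<sigma> l I) t v" by (rule keep)
qed

lemma read_acks_valid_step:
  assumes keep: "\<And>t v. valid_pair I t v \<Longrightarrow> valid_pair (record_issue W S \<sigma> l I) t v"
    and "server_pairs_valid (record_issue W S \<sigma> l I) \<sigma>'" "read_acks_valid I \<sigma>"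
  shows "read_acks_valid (record_issue W S \<sigma> l I) \<sigma>'"
  unfolding read_acks_valid_def
proof (intro allI impI)
  fix src d t v rid s assume m: "(src, d, ReadAck t v rid s) \<in># net \<sigma>'"
  have sm: "stag \<sigma> s \<le> stag \<sigma>' s" using step by (rule stag_step_mono)
  from ReadAck_origin[OF step finS m] show "valid_pair (record_issue W S \<sigma> l I) t v \<and> t \<le> stag \<sigma>' s"
  proof
    assume "(src, d, ReadAck t v rid s) \<in># net \<sigma>"
    then show ?thesis using assms(3) keep sm unfolding read_acks_valid_def by (meson order_trans)
  qed (use assms(2) in \<open>auto simp: server_pairs_valid_def\<close>)
qed

lemma read_phase_valid_step:
  assumes keep: "\<And>t v. valid_pair I t v \<Longrightarrow> valid_pair (record_issue W S \<sigma> l I) t v"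
    and "read_acks_valid I \<sigma>" "read_phase_valid I \<sigma>"
  shows "read_phase_valid (record_issue W S \<sigma> l I) \<sigma>'"
proof -
  have sm: "\<And>s. stag \<sigma> s \<le> stag \<sigma>' s" using step by (rule stag_step_mono)
  have old: "valid_pair (record_issue W S \<sigma> l I) t v \<and> t \<le> stag \<sigma>' s" if "rph \<sigma> r = RWait A" "A s = Some (t,v)" for r A s t v
    using assms(3) that keep sm unfolding read_phase_valid_def by (meson order_trans)
  show ?thesis unfolding read_phase_valid_def
  proof (intro allI impI)
    fix r A s t v assume A: "rph \<sigma>' r = RWait A" "A s = Some (t, v)"
    show "valid_pair (record_issue W S \<sigma> l I) t v \<and> t \<le> stag \<sigma>' s"
    proof (cases "rph \<sigma>' r = rph \<sigma> r")
      case True then show ?thesis using A old[of r A s t v] by simp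
    next
      case False
      from step this A show ?thesis
      proof (cases rule: step.cases)
        case (rd_ack_wait src r0 t0 v0 rid s0 A0 A')
        have "valid_pair (record_issue W S \<sigma> l I) t0 v0 \<and> t0 \<le> stag \<sigma>' s0"
          using assms(2) rd_ack_wait keep sm unfolding read_acks_valid_def by (meson order_trans)
        moreover have "r = r0" using rd_ack_wait False by (auto split: if_splits)
        then have "A = A0(s0 \<mapsto> (t0, v0))" using rd_ack_wait A by auto
        ultimately show ?thesis using old[OF \<open>rph \<sigma> r0 = RWait A0\<close>] A \<open>r = r0\<close>
          by (cases "s = s0") auto
      qed (auto split: if_splits)
    qed
  qed
qed

lemma issue_inv_step:
  assumes wf: "wf_state S \<sigma>" and inv: "issue_inv I \<sigma>"
  shows "issue_inv (record_issue W S \<sigma> l I) \<sigma>'"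
proof -
  from inv have "issues_bounded I \<sigma>" "issued_tags_wf I" "server_pairs_valid I \<sigma>"
    "write_requests_carry_issued I \<sigma>" "write_acks_cover_issued I \<sigma>" "server_wops_cover_issued I \<sigma>"
    "write_phase_covers_issued I \<sigma>" "relays_valid I \<sigma>" "read_acks_valid I \<sigma>" "read_phase_valid I \<sigma>"
    by (simp_all add: issue_inv_def)
  note old = this
  note keep = record_issue_keeps[OF old(1)] and keep_valid = valid_pair_record_issue[OF old(1)]
  have servers: "server_pairs_valid (record_issue W S \<sigma> l I) \<sigma>'"
    using server_pairs_valid_step[OF keep_valid old(2,3,4,8)] .
  have "write_requests_issued \<sigma>" using wf by (simp add: wf_state_def)
  then show ?thesis
    unfolding issue_inv_def
    using issues_bounded_step[OF old(1)] issued_tags_wf_step[OF old(2)] servers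
      write_requests_carry_issued_step[OF keep old(4)]
      write_acks_cover_issued_step[OF keep wf old(1,4,5,6)]
      server_wops_cover_issued_step[OF keep old(4,6)] write_phase_covers_issued_step[OF keep old(5,7)]
      relays_valid_step[OF keep_valid old(3,8)] read_acks_valid_step[OF keep_valid servers old(9)]
      read_phase_valid_step[OF keep_valid old(9,10)]
    by blast
qed

end

section \<open>Tags propagate from a quorum to all later operations\<close>

text \<open>Suppose tag t is held by every server of a quorum Q in a state where writer and reader
  counters are wop0 and rop0.  From then on every message, phase state and issued tag belonging
  to an operation started later carries a tag at least t; tags issued later exceed t.\<close>

definition "floor_servers Q t \<sigma> \<longleftrightarrow> (\<forall>s\<in>Q. t \<le> stag \<sigma> s)"
definition "floor_discover_acks Q t wop0 \<sigma> \<longleftrightarrow>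
  (\<forall>src d t' v k s. (src,d,DiscoverAck t' v k s) \<in># net \<sigma> \<longrightarrow> wop0 d < k \<longrightarrow> s \<in> Q \<longrightarrow> t \<le> t')"
definition "floor_discover_phase Q t wop0 \<sigma> \<longleftrightarrow>
  (\<forall>w x A s t'. wph \<sigma> w = WDisc x A \<longrightarrow> wop0 w < wop \<sigma> w \<longrightarrow> s \<in> Q \<longrightarrow> A s = Some t' \<longrightarrow> t \<le> t')"
definition "floor_issues t wop0 I \<longleftrightarrow> (\<forall>w k t' v. I w k = Some (t',v) \<longrightarrow> Suc (wop0 w) < k \<longrightarrow> t < t')"
definition "floor_relays Q t rop0 \<sigma> \<longleftrightarrow>
  (\<forall>src d t' v rid s. (src,d,ReadRelay t' v rid s) \<in># net \<sigma> \<longrightarrow> rop0 (fst rid) < snd rid \<longrightarrow> s \<in> Q \<longrightarrow> t \<le> t')"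
definition "floor_relay_sets Q t rop0 \<sigma> \<longleftrightarrow>
  (\<forall>s rid. srelays \<sigma> s rid \<inter> Q \<noteq> {} \<longrightarrow> rop0 (fst rid) < snd rid \<longrightarrow> t \<le> stag \<sigma> s)"
definition "floor_read_acks t rop0 \<sigma> \<longleftrightarrow>
  (\<forall>src d t' v rid s. (src,d,ReadAck t' v rid s) \<in># net \<sigma> \<longrightarrow> rop0 (fst rid) < snd rid \<longrightarrow> t \<le> t')"
definition "floor_read_phase t rop0 \<sigma> \<longleftrightarrow>
  (\<forall>r A s t' v. rph \<sigma> r = RWait A \<longrightarrow> rop0 r < rop \<sigma> r \<longrightarrow> A s = Some (t',v) \<longrightarrow> t \<le> t')"

definition tag_floor :: "'p set \<Rightarrow> 'p tag \<Rightarrow> ('p \<Rightarrow> nat) \<Rightarrow> ('p \<Rightarrow> nat) \<Rightarrow> ('p::linorder,'v) issue_map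
    \<Rightarrow> ('p,'v) gstate \<Rightarrow> bool" where
  "tag_floor Q t wop0 rop0 I \<sigma> \<longleftrightarrow> floor_servers Q t \<sigma> \<and> floor_discover_acks Q t wop0 \<sigma>
     \<and> floor_discover_phase Q t wop0 \<sigma> \<and> floor_issues t wop0 I \<and> floor_relays Q t rop0 \<sigma>
     \<and> floor_relay_sets Q t rop0 \<sigma> \<and> floor_read_acks t rop0 \<sigma> \<and> floor_read_phase t rop0 \<sigma>"

lemma tag_floor_start:
  assumes "wf_state S \<sigma>" "issues_bounded I \<sigma>" "\<forall>s\<in>Q. t \<le> stag \<sigma> s"
  shows "tag_floor Q t (wop \<sigma>) (rop \<sigma>) I \<sigma>"
proof -
  have "\<not> wop \<sigma> d < k" if "(src,d,DiscoverAck t' v k s) \<in># net \<sigma>" for src d t' v k s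
    using assms(1) that unfolding wf_state_def discover_acks_issued_def by (simp add: not_less)
  moreover have "\<not> Suc (wop \<sigma> w) < k" if "I w k = Some p" for w k p
    using assms(2) that unfolding issues_bounded_def by (metis Suc_lessD not_less option.simps(3))
  moreover have "\<not> rop \<sigma> (fst rid) < snd rid" if "(src,d,ReadRelay t' v rid s) \<in># net \<sigma>" for src d t' v rid s
    using assms(1) that unfolding wf_state_def relays_issued_def by (simp add: not_less)
  moreover have "\<not> rop \<sigma> (fst rid) < snd rid" if "x \<in> srelays \<sigma> s rid" for x s rid
    using assms(1) that unfolding wf_state_def relay_sets_issued_def by (metis empty_iff not_less)
  moreover have "\<not> rop \<sigma> (fst rid) < snd rid" if "(src,d,ReadAck t' v rid s) \<in># net \<sigma>" for src d t' v rid s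
    using assms(1) that unfolding wf_state_def read_acks_issued_def by (simp add: not_less)
  ultimately show ?thesis
    using assms(3) unfolding tag_floor_def floor_servers_def floor_discover_acks_def floor_discover_phase_def
      floor_issues_def floor_relays_def floor_relay_sets_def floor_read_acks_def floor_read_phase_def
    by (meson disjoint_iff less_irrefl)
qed

context
  fixes W R S Q :: "'p::linorder set" and \<sigma> \<sigma>' :: "('p,'v) gstate" and l and I :: "('p,'v) issue_map"
    and t :: "'p tag" and wop0 rop0 :: "'p \<Rightarrow> nat"
  assumes step: "step W R S \<sigma> l \<sigma>'" and finS: "finite S"
    and QS: "Q \<subseteq> S" and Q_quorum: "quorum S \<le> card Q"
    and wf: "wf_state S \<sigma>" and floor: "tag_floor Q t wop0 rop0 I \<sigma>"
begin

lemma floor_servers_step: "floor_servers Q t \<sigma>'"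
  using floor stag_step_mono[OF step] order_trans unfolding tag_floor_def floor_servers_def by blast

lemma floor_discover_acks_step: "floor_discover_acks Q t wop0 \<sigma>'"
  unfolding floor_discover_acks_def
proof (intro allI impI)
  fix src d t' v k s assume m: "(src,d,DiscoverAck t' v k s) \<in># net \<sigma>'" "wop0 d < k" "s \<in> Q"
  from DiscoverAck_origin[OF step finS m(1)] show "t \<le> t'"
    using floor m unfolding tag_floor_def floor_servers_def floor_discover_acks_def by blast
qed

lemma floor_discover_phase_step: "floor_discover_phase Q t wop0 \<sigma>'"
  unfolding floor_discover_phase_def
proof (intro allI impI)
  fix w x A s t' assume m: "wph \<sigma>' w = WDisc x A" "wop0 w < wop \<sigma>' w" "s \<in> Q" "A s = Some t'"
  have acks: "t \<le> t'" if "(src,d,DiscoverAck t' v k s) \<in># net \<sigma>" "wop0 d < k" "s \<in> Q" for src d t' v k s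
    using floor that unfolding tag_floor_def floor_discover_acks_def by blast
  have phase: "t \<le> t'" if "wph \<sigma> w = WDisc x A" "wop0 w < wop \<sigma> w" "s \<in> Q" "A s = Some t'" for w x A s t'
    using floor that unfolding tag_floor_def floor_discover_phase_def by blast
  show "t \<le> t'"
  proof (cases "wph \<sigma>' w = wph \<sigma> w \<and> wop \<sigma>' w = wop \<sigma> w")
    case True then show ?thesis using phase[of w x A s t'] m by simp
  next
    case False
    from step this m show ?thesis
    proof (cases rule: step.cases)
      case (wr_dack_wait src w1 t1 v1 k1 s1 x1 A1 A')
      then have "w = w1" "A = A1(s1 \<mapsto> t1)" "wop \<sigma>' w = wop \<sigma> w" using False m by (auto split: if_splits)
      then show ?thesis using acks[of src w1 t1 v1 k1 s1] phase[of w1 x1 A1 s t'] wr_dack_wait m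
        by (cases "s = s1") auto
    qed (auto split: if_splits)
  qed
qed

lemma floor_issues_step: "floor_issues t wop0 (record_issue W S \<sigma> l I)"
  unfolding floor_issues_def
proof (intro allI impI)
  fix w k tg vv assume m: "record_issue W S \<sigma> l I w k = Some (tg,vv)" "Suc (wop0 w) < k"
  show "t < tg"
  proof (cases "I w k = Some (tg,vv)")
    case True then show ?thesis using floor m unfolding tag_floor_def floor_issues_def by blast
  next
    case False
    then obtain src t0 v0 s0 x A where l: "l = Dlv (src, w, DiscoverAck t0 v0 (wop \<sigma> w) s0) None"
      and phase: "wph \<sigma> w = WDisc x A" and k: "k = Suc (wop \<sigma> w)"
      and A_quorum: "quorum S \<le> card (dom (A(s0 \<mapsto> t0)))"
      and tg: "tg = (Suc (Max (fst ` ran (A(s0 \<mapsto> t0)))), w)"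
      using record_issue_new[OF m(1)] by metis
    have ack: "(src, w, DiscoverAck t0 v0 (wop \<sigma> w) s0) \<in># net \<sigma>"
      using step l by (cases rule: step.cases) auto
    have "s0 \<in> S" "dom A \<subseteq> S"
      using wf ack phase unfolding wf_state_def discover_acks_issued_def discover_phase_servers_def by blast+
    then have domS: "dom (A(s0 \<mapsto> t0)) \<subseteq> S" by auto
    obtain s1 where s1: "s1 \<in> dom (A(s0 \<mapsto> t0))" "s1 \<in> Q"
      using quorums_intersect[OF finS domS QS A_quorum Q_quorum] by blast
    then obtain t1 where t1: "(A(s0 \<mapsto> t0)) s1 = Some t1" by blast
    have "t \<le> t1"
      using floor ack phase t1 s1(2) m(2) k
      unfolding tag_floor_def floor_discover_acks_def floor_discover_phase_def
      by (cases "s1 = s0") auto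
    moreover have "fst t1 \<le> Max (fst ` ran (A(s0 \<mapsto> t0)))"
    proof (rule Max_ge)
      show "finite (fst ` ran (A(s0 \<mapsto> t0)))"
        using domS finS finite_subset by (blast intro: finite_ran finite_imageI)
      show "fst t1 \<in> fst ` ran (A(s0 \<mapsto> t0))" using t1 by (blast intro: ranI)
    qed
    ultimately have "fst t < fst tg" using tg tag_le_imp_fst_le by fastforce
    then show ?thesis by (rule fst_less_imp_tag_less)
  qed
qed

lemma floor_relays_step: "floor_relays Q t rop0 \<sigma>'"
  unfolding floor_relays_def
proof (intro allI impI)
  fix src d t' v rid s assume m: "(src,d,ReadRelay t' v rid s) \<in># net \<sigma>'" "rop0 (fst rid) < snd rid" "s \<in> Q"
  from ReadRelay_origin[OF step finS m(1)] show "t \<le> t'"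
    using floor m unfolding tag_floor_def floor_servers_def floor_relays_def by blast
qed

lemma floor_relay_sets_step: "floor_relay_sets Q t rop0 \<sigma>'"
  unfolding floor_relay_sets_def
proof (intro allI impI)
  fix s rid assume m: "srelays \<sigma>' s rid \<inter> Q \<noteq> {}" "rop0 (fst rid) < snd rid"
  have sets: "t \<le> stag \<sigma> s" if "srelays \<sigma> s rid \<inter> Q \<noteq> {}" "rop0 (fst rid) < snd rid" for s rid
    using floor that unfolding tag_floor_def floor_relay_sets_def by blast
  have later: "t \<le> stag \<sigma>' s" if "t \<le> stag \<sigma> s" for s
    using that stag_step_mono[OF step] order_trans by blast
  from srelays_frame[OF step] show "t \<le> stag \<sigma>' s"
  proof
    assume "srelays \<sigma>' = srelays \<sigma>" then show ?thesis using sets later m by simp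
  next
    assume "\<exists>src s t' v rid s'. l = Dlv (src, s, ReadRelay t' v rid s') None
      \<and> (src,s,ReadRelay t' v rid s') \<in># net \<sigma>
      \<and> srelays \<sigma>' = (srelays \<sigma>)(s := (srelays \<sigma> s)(rid := insert s' (srelays \<sigma> s rid)))
      \<and> stag \<sigma>' s = max (stag \<sigma> s) t'"
    then obtain src s0 t' v rid0 s' where relay: "(src,s0,ReadRelay t' v rid0 s') \<in># net \<sigma>"
      and sets': "srelays \<sigma>' = (srelays \<sigma>)(s0 := (srelays \<sigma> s0)(rid0 := insert s' (srelays \<sigma> s0 rid0)))"
      and tag': "stag \<sigma>' s0 = max (stag \<sigma> s0) t'" by blast
    show ?thesis
    proof (cases "s = s0 \<and> rid = rid0 \<and> s' \<in> Q")
      case True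
      then have "t \<le> t'" using floor relay m(2) unfolding tag_floor_def floor_relays_def by blast
      then show ?thesis using tag' True by (simp add: le_max_iff_disj)
    next
      case False
      then have "srelays \<sigma> s rid \<inter> Q \<noteq> {}" using m(1) sets' by (auto split: if_splits)
      then show ?thesis using sets later m(2) by blast
    qed
  qed
qed

lemma floor_read_acks_step: "floor_read_acks t rop0 \<sigma>'"
  unfolding floor_read_acks_def
proof (intro allI impI)
  fix src d t' v rid s assume m: "(src,d,ReadAck t' v rid s) \<in># net \<sigma>'" "rop0 (fst rid) < snd rid"
  from ReadAck_origin[OF step finS m(1)] show "t \<le> t'"
  proof
    assume "(src,d,ReadAck t' v rid s) \<in># net \<sigma>"
    then show ?thesis using floor m(2) unfolding tag_floor_def floor_read_acks_def by blast
  next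
    assume new: "t' = stag \<sigma>' s \<and> v = sval \<sigma>' s \<and> quorum S \<le> card (srelays \<sigma>' s rid)"
    have "srelays \<sigma>' s rid \<subseteq> S"
      using wf_state_step[OF step finS wf] unfolding wf_state_def relay_sets_issued_def by blast
    then have "srelays \<sigma>' s rid \<inter> Q \<noteq> {}" using quorums_intersect[OF finS _ QS _ Q_quorum] new by blast
    then show ?thesis using floor_relay_sets_step m(2) new unfolding floor_relay_sets_def by blast
  qed
qed

lemma floor_read_phase_step: "floor_read_phase t rop0 \<sigma>'"
  unfolding floor_read_phase_def
proof (intro allI impI)
  fix r A s t' v assume m: "rph \<sigma>' r = RWait A" "rop0 r < rop \<sigma>' r" "A s = Some (t',v)"
  have acks: "t \<le> t'" if "(src,d,ReadAck t' v rid s) \<in># net \<sigma>" "rop0 (fst rid) < snd rid" for src d t' v rid s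
    using floor that unfolding tag_floor_def floor_read_acks_def by blast
  have phase: "t \<le> t'" if "rph \<sigma> r = RWait A" "rop0 r < rop \<sigma> r" "A s = Some (t',v)" for r A s t' v
    using floor that unfolding tag_floor_def floor_read_phase_def by blast
  show "t \<le> t'"
  proof (cases "rph \<sigma>' r = rph \<sigma> r \<and> rop \<sigma>' r = rop \<sigma> r")
    case True then show ?thesis using phase[of r A s t' v] m by simp
  next
    case False
    from step this m show ?thesis
    proof (cases rule: step.cases)
      case (rd_ack_wait src r1 t1 v1 rid1 s1 A1 A')
      then have "r = r1" "A = A1(s1 \<mapsto> (t1,v1))" "rop \<sigma>' r = rop \<sigma> r" using False m by (auto split: if_splits)
      then show ?thesis using acks[of src r1 t1 v1 rid1 s1] phase[of r1 A1 s t' v] rd_ack_wait m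
        by (cases "s = s1") auto
    qed (auto split: if_splits)
  qed
qed

lemma tag_floor_step: "tag_floor Q t wop0 rop0 (record_issue W S \<sigma> l I) \<sigma>'"
  unfolding tag_floor_def
  using floor_servers_step floor_discover_acks_step floor_discover_phase_step floor_issues_step
    floor_relays_step floor_relay_sets_step floor_read_acks_step floor_read_phase_step
  by blast

end

locale oh_mam_run =
  fixes W R S :: "'p::linorder set" and f :: nat
    and \<sigma>s :: "nat \<Rightarrow> ('p,'v) gstate" and ls :: "nat \<Rightarrow> ('p,'v) label"
  assumes writers_not_readers: "W \<inter> R = {}"
    and finS: "finite S"
    and run: "execution W R S f \<sigma>s ls"
begin

lemma run_step: "step W R S (\<sigma>s i) (ls i) (\<sigma>s (Suc i))"
  using run by (simp add: execution_def)

lemma run_init: "\<sigma>s 0 = init_state"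
  using run by (simp add: execution_def)

primrec issued_at :: "nat \<Rightarrow> ('p,'v) issue_map" where
  "issued_at 0 = (\<lambda>_ _. None)"
| "issued_at (Suc i) = record_issue W S (\<sigma>s i) (ls i) (issued_at i)"

lemma wf_state_run: "wf_state S (\<sigma>s i)"
  by (induction i) (simp_all add: run_init wf_state_init wf_state_step[OF run_step finS])

lemma issue_inv_run: "issue_inv (issued_at i) (\<sigma>s i)"
  by (induction i) (simp_all add: run_init issue_inv_init issue_inv_step[OF run_step finS wf_state_run])

lemma wop_run_mono: "i \<le> j \<Longrightarrow> wop (\<sigma>s i) w \<le> wop (\<sigma>s j) w"
  by (rule lift_Suc_mono_le[of "\<lambda>i. wop (\<sigma>s i) w"]) (rule wop_step_mono[OF run_step])
lemma rop_run_mono: "i \<le> j \<Longrightarrow> rop (\<sigma>s i) r \<le> rop (\<sigma>s j) r"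
  by (rule lift_Suc_mono_le[of "\<lambda>i. rop (\<sigma>s i) r"]) (rule rop_step_mono[OF run_step])
lemma crashed_run_mono: "i \<le> j \<Longrightarrow> crashed (\<sigma>s i) \<subseteq> crashed (\<sigma>s j)"
  by (rule lift_Suc_mono_le[of "\<lambda>i. crashed (\<sigma>s i)"]) (rule crashed_step_mono[OF run_step])
lemma issued_at_mono: "i \<le> j \<Longrightarrow> issued_at i w k = Some p \<Longrightarrow> issued_at j w k = Some p"
proof (induction j)
  case (Suc j)
  show ?case
  proof (cases "i \<le> j")
    case True
    then have "issued_at j w k = Some p" using Suc by blast
    moreover have "issues_bounded (issued_at j) (\<sigma>s j)" using issue_inv_run by (simp add: issue_inv_def)
    ultimately show ?thesis using record_issue_keeps[OF run_step finS] by simp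
  next
    case False then show ?thesis using Suc by (simp add: le_Suc_eq)
  qed
qed simp

lemma discover_phase_origin:
  "wph (\<sigma>s i) w = WDisc x A \<Longrightarrow> \<exists>b<i. ls b = Inv w (OWrite x) \<and> wop (\<sigma>s (Suc b)) w = wop (\<sigma>s i) w"
proof (induction i arbitrary: A)
  case 0 then show ?case by (simp add: run_init init_state_def)
next
  case (Suc i)
  show ?case
  proof (cases "\<exists>A0. wph (\<sigma>s i) w = WDisc x A0 \<and> wop (\<sigma>s (Suc i)) w = wop (\<sigma>s i) w")
    case True then show ?thesis using Suc.IH by (metis less_SucI)
  next
    case False
    from run_step[of i] Suc.prems False have "ls i = Inv w (OWrite x)"
      by (cases rule: step.cases) (auto split: if_splits)
    then show ?thesis by blast
  qed
qed

lemma issued_at_origin: "issued_at i w k = Some (t, v) \<Longrightarrow>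
   \<exists>x b. b < i \<and> v = Some x \<and> ls b = Inv w (OWrite x) \<and> Suc (wop (\<sigma>s (Suc b)) w) = k"
proof (induction i)
  case (Suc i)
  show ?case
  proof (cases "issued_at i w k = Some (t, v)")
    case True then show ?thesis using Suc.IH less_SucI by blast
  next
    case False
    have "record_issue W S (\<sigma>s i) (ls i) (issued_at i) w k = Some (t, v)" using Suc.prems by simp
    from record_issue_new[OF this False] obtain x A
      where "wph (\<sigma>s i) w = WDisc x A" "k = Suc (wop (\<sigma>s i) w)" "v = Some x" by metis
    then show ?thesis using discover_phase_origin by (metis less_SucI)
  qed
qed simp

definition issued :: "'p \<Rightarrow> nat \<Rightarrow> 'p tag \<times> 'v option" where
  "issued w k = (SOME p. \<exists>i. issued_at i w k = Some p)"

lemma issued_eq: "issued_at i w k = Some p \<Longrightarrow> issued w k = p"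
  unfolding issued_def
proof (rule some_equality)
  show "issued_at i w k = Some p \<Longrightarrow> \<exists>i. issued_at i w k = Some p" by blast
next
  fix q assume "issued_at i w k = Some p" "\<exists>j. issued_at j w k = Some q"
  then show "q = p"
    using issued_at_mono[OF max.cobounded1] issued_at_mono[OF max.cobounded2] by (metis option.inject)
qed

lemma tag_floor_run:
  assumes "Q \<subseteq> S" "quorum S \<le> card Q" "\<forall>s\<in>Q. t \<le> stag (\<sigma>s j) s" "j \<le> i"
  shows "tag_floor Q t (wop (\<sigma>s j)) (rop (\<sigma>s j)) (issued_at i) (\<sigma>s i)"
  using assms(4)
proof (induction i rule: dec_induct)
  case base
  show ?case using tag_floor_start[OF wf_state_run _ assms(3)] issue_inv_run by (simp add: issue_inv_def)
next
  case (step i)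
  then show ?case using tag_floor_step[OF run_step finS assms(1,2) wf_state_run] by simp
qed

end

fun response_tag :: "('p::linorder,'v) label \<Rightarrow> ('p,'v) rphase \<Rightarrow> 'p tag" where
  "response_tag (Dlv (src, r, ReadAck t v rid s) ro) (RWait A) = Min (fst ` ran (A(s \<mapsto> (t,v))))"
| "response_tag _ _ = undefined"

context oh_mam_run
begin

lemma write_in_progress:
  assumes inv: "ls b = Inv w (OWrite x)" and "b < c"
    and no_resp: "\<forall>j r. b < j \<longrightarrow> j < c \<longrightarrow> \<not> resp_by ls j w r"
  shows "(\<exists>A. wph (\<sigma>s c) w = WDisc x A \<and> wop (\<sigma>s c) w = wop (\<sigma>s (Suc b)) w) \<or>
         (\<exists>A. wph (\<sigma>s c) w = WWrite A \<and> wop (\<sigma>s c) w = Suc (wop (\<sigma>s (Suc b)) w))"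
  using \<open>b < c\<close> unfolding Suc_le_eq[symmetric]
proof (induction c rule: dec_induct)
  case base
  show ?case using invocation_step[OF run_step inv] by auto
next
  case (step n)
  have "\<not> resp_by ls n w WResp" using no_resp step by simp
  then show ?case
    using step.IH discover_phase_step[OF run_step, of n w x] write_phase_step[OF run_step, of n w]
    unfolding resp_by_def by fastforce
qed

lemma read_in_progress:
  assumes inv: "ls b = Inv r ORead" and "b < c"
    and no_resp: "\<forall>j rr. b < j \<longrightarrow> j < c \<longrightarrow> \<not> resp_by ls j r rr"
  shows "\<exists>A. rph (\<sigma>s c) r = RWait A \<and> rop (\<sigma>s c) r = rop (\<sigma>s (Suc b)) r"
  using \<open>b < c\<close> unfolding Suc_le_eq[symmetric]
proof (induction c rule: dec_induct)
  case base
  show ?case using invocation_step[OF run_step inv] by auto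
next
  case (step n)
  have "\<And>u. \<not> resp_by ls n r (RResp u)" using no_resp step by simp
  then show ?case using step.IH read_phase_step[OF run_step, of n r] unfolding resp_by_def by fastforce
qed

lemma op_invocation_cases:
  "is_op ls i \<Longrightarrow> (\<exists>w x. ls i = Inv w (OWrite x) \<and> w \<in> W) \<or> (\<exists>r. ls i = Inv r ORead \<and> r \<in> R)"
  unfolding is_op_def using invocation_step[OF run_step] by (metis opkind.exhaust)

lemma write_invocation:
  "is_write ls a \<Longrightarrow> ls a = Inv (op_proc ls a) (OWrite (write_val ls a)) \<and> op_proc ls a \<in> W"
  unfolding is_write_def op_proc_def write_val_def using invocation_step[OF run_step] by fastforce

lemma read_invocation: "is_read ls a \<Longrightarrow> ls a = Inv (op_proc ls a) ORead \<and> op_proc ls a \<in> R"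
  unfolding is_read_def op_proc_def using invocation_step[OF run_step] by fastforce

lemma write_not_read: "is_write ls a \<Longrightarrow> \<not> is_read ls a"
  unfolding is_write_def is_read_def by auto

lemma is_op_iff: "is_op ls a \<longleftrightarrow> is_write ls a \<or> is_read ls a"
  unfolding is_op_def is_write_def is_read_def by (metis opkind.exhaust)

lemma completes_unique: "completes ls a j r \<Longrightarrow> completes ls a j' r' \<Longrightarrow> j = j' \<and> r = r'"
  unfolding completes_def resp_by_def by (metis label.inject(2) linorder_neqE_nat option.inject prod.inject)

definition completion_time :: "nat \<Rightarrow> nat" where
  "completion_time a = (SOME c. \<exists>rr. completes ls a c rr)"

lemma completion_time_eq: "completes ls a c rr \<Longrightarrow> completion_time a = c"
  unfolding completion_time_def by (rule some_equality) (auto dest: completes_unique)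

definition write_counter :: "nat \<Rightarrow> nat" where
  "write_counter a = Suc (wop (\<sigma>s (Suc a)) (op_proc ls a))"

definition op_tag :: "nat \<Rightarrow> 'p tag" where
  "op_tag a = (if is_write ls a then fst (issued (op_proc ls a) (write_counter a))
     else response_tag (ls (completion_time a)) (rph (\<sigma>s (completion_time a)) (op_proc ls a)))"

lemma write_completion:
  assumes inv: "ls a = Inv w (OWrite x)" and cp: "completes ls a c rr"
  shows "\<exists>Q v. issued_at c w (write_counter a) = Some (op_tag a, v) \<and> Q \<subseteq> S \<and> quorum S \<le> card Q
     \<and> (\<forall>s\<in>Q. op_tag a \<le> stag (\<sigma>s c) s)"
proof -
  have w: "op_proc ls a = w" "is_write ls a" using inv by (auto simp: op_proc_def is_write_def)
  have "a < c" and resp: "resp_by ls c w rr" and no_resp: "\<forall>j r. a < j \<longrightarrow> j < c \<longrightarrow> \<not> resp_by ls j w r"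
    using cp w unfolding completes_def by auto
  have "w \<notin> R" using invocation_step[OF run_step inv] writers_not_readers by auto
  obtain src m where "ls c = Dlv (src, w, m) (Some rr)" using resp unfolding resp_by_def by blast
  from write_response_step[OF run_step this \<open>w \<notin> R\<close>] obtain t v s A
    where ack: "(src, w, WriteAck t v (wop (\<sigma>s c) w) s) \<in># net (\<sigma>s c)" and A: "wph (\<sigma>s c) w = WWrite A"
      and quorum: "quorum S \<le> card (insert s A)" by blast
  have counter: "wop (\<sigma>s c) w = write_counter a"
    using write_in_progress[OF inv \<open>a < c\<close> no_resp] A w by (auto simp: write_counter_def)
  have inv_c: "issue_inv (issued_at c) (\<sigma>s c)" and wf_c: "wf_state S (\<sigma>s c)"
    by (rule issue_inv_run, rule wf_state_run)
  obtain t' v' where t': "issued_at c w (wop (\<sigma>s c) w) = Some (t',v')" "\<forall>s\<in>A. t' \<le> stag (\<sigma>s c) s"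
    using inv_c A unfolding issue_inv_def write_phase_covers_issued_def by blast
  moreover have "t' \<le> stag (\<sigma>s c) s"
    using inv_c ack t'(1) unfolding issue_inv_def write_acks_cover_issued_def by fastforce
  moreover have "insert s A \<subseteq> S"
    using wf_c ack A unfolding wf_state_def write_phase_servers_def write_acks_issued_def by blast
  moreover have "op_tag a = t'" using issued_eq[OF t'(1)] counter w by (simp add: op_tag_def)
  ultimately show ?thesis using quorum counter by (intro exI[of _ "insert s A"]) auto
qed

lemma read_completion:
  assumes inv: "ls a = Inv r ORead" and cp: "completes ls a c rr"
  obtains src t v s A u where
    "ls c = Dlv (src, r, ReadAck t v (r, rop (\<sigma>s c) r) s) (Some (RResp u))" "rr = RResp u"
    "rph (\<sigma>s c) r = RWait A" "rop (\<sigma>s c) r = rop (\<sigma>s (Suc a)) r"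
    "quorum S \<le> card (dom (A(s \<mapsto> (t,v))))" "dom (A(s \<mapsto> (t,v))) \<subseteq> S"
    "(Min (fst ` ran (A(s \<mapsto> (t,v)))), u) \<in> ran (A(s \<mapsto> (t,v)))"
    "(src, r, ReadAck t v (r, rop (\<sigma>s c) r) s) \<in># net (\<sigma>s c)"
    "\<forall>s' t' v'. (A(s \<mapsto> (t,v))) s' = Some (t',v') \<longrightarrow> valid_pair (issued_at c) t' v' \<and> t' \<le> stag (\<sigma>s c) s'"
proof -
  have r: "op_proc ls a = r" using inv by (simp add: op_proc_def)
  have "a < c" and resp: "resp_by ls c r rr" and no_resp: "\<forall>j rr. a < j \<longrightarrow> j < c \<longrightarrow> \<not> resp_by ls j r rr"
    using cp r unfolding completes_def by auto
  have "r \<notin> W" using invocation_step[OF run_step inv] writers_not_readers by auto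
  obtain src m where l: "ls c = Dlv (src, r, m) (Some rr)" using resp unfolding resp_by_def by blast
  from read_response_step[OF run_step this \<open>r \<notin> W\<close>] obtain t v s A u
    where m: "m = ReadAck t v (r, rop (\<sigma>s c) r) s" "rr = RResp u" "rph (\<sigma>s c) r = RWait A"
      "quorum S \<le> card (dom (A(s \<mapsto> (t,v))))" "(src,r,m) \<in># net (\<sigma>s c)"
      "(Min (fst ` ran (A(s \<mapsto> (t,v)))), u) \<in> ran (A(s \<mapsto> (t,v)))" by blast
  have "rop (\<sigma>s c) r = rop (\<sigma>s (Suc a)) r"
    using read_in_progress[OF inv \<open>a < c\<close> no_resp] m(3) by auto
  moreover have "dom (A(s \<mapsto> (t,v))) \<subseteq> S"
    using wf_state_run[of c] m unfolding wf_state_def read_phase_servers_def read_acks_issued_def by auto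
  moreover have "\<forall>s' t' v'. (A(s \<mapsto> (t,v))) s' = Some (t',v') \<longrightarrow> valid_pair (issued_at c) t' v' \<and> t' \<le> stag (\<sigma>s c) s'"
    using issue_inv_run[of c] m unfolding issue_inv_def read_phase_valid_def read_acks_valid_def by auto
  ultimately show ?thesis using that l m by blast
qed

lemma read_tag_is_min:
  assumes "ls a = Inv r ORead" "completes ls a c rr"
    "ls c = Dlv (src, r, ReadAck t v rid s) ro" "rph (\<sigma>s c) r = RWait A"
  shows "op_tag a = Min (fst ` ran (A(s \<mapsto> (t,v))))"
  using assms completion_time_eq[OF assms(2)] by (simp add: op_tag_def op_proc_def is_write_def)

lemma read_op_tag:
  assumes inv: "ls a = Inv r ORead" and cp: "completes ls a c rr"
  shows "\<exists>Q u. rr = RResp u \<and> Q \<subseteq> S \<and> quorum S \<le> card Q \<and> (\<forall>s\<in>Q. op_tag a \<le> stag (\<sigma>s c) s)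
     \<and> valid_pair (issued_at c) (op_tag a) u"
proof -
  obtain src t v s A u where l: "ls c = Dlv (src, r, ReadAck t v (r, rop (\<sigma>s c) r) s) (Some (RResp u))"
    and rr: "rr = RResp u" and A: "rph (\<sigma>s c) r = RWait A"
    and quorum: "quorum S \<le> card (dom (A(s \<mapsto> (t,v))))" and dom: "dom (A(s \<mapsto> (t,v))) \<subseteq> S"
    and min: "(Min (fst ` ran (A(s \<mapsto> (t,v)))), u) \<in> ran (A(s \<mapsto> (t,v)))"
    and acks: "\<forall>s' t' v'. (A(s \<mapsto> (t,v))) s' = Some (t',v') \<longrightarrow> valid_pair (issued_at c) t' v' \<and> t' \<le> stag (\<sigma>s c) s'"
    using read_completion[OF inv cp] by metis
  have tag: "op_tag a = Min (fst ` ran (A(s \<mapsto> (t,v))))" by (rule read_tag_is_min[OF inv cp l A])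
  have fin: "finite (ran (A(s \<mapsto> (t,v))))" using dom finS finite_subset finite_ran by blast
  have "op_tag a \<le> stag (\<sigma>s c) s'" if "s' \<in> dom (A(s \<mapsto> (t,v)))" for s'
  proof -
    from that obtain t' v' where e: "(A(s \<mapsto> (t,v))) s' = Some (t',v')" by (metis domD surj_pair)
    then have "op_tag a \<le> t'" unfolding tag using fin by (intro Min_le) (force intro: ranI)+
    then show ?thesis using acks e order_trans by blast
  qed
  moreover have "valid_pair (issued_at c) (op_tag a) u"
  proof -
    from min obtain s1 where "(A(s \<mapsto> (t,v))) s1 = Some (op_tag a, u)" unfolding tag ran_def by blast
    then show ?thesis using acks by blast
  qed
  ultimately show ?thesis using rr quorum dom by blast
qed

lemma op_tag_quorum:
  assumes "is_op ls a" "completes ls a c rr"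
  shows "\<exists>Q. Q \<subseteq> S \<and> quorum S \<le> card Q \<and> (\<forall>s\<in>Q. op_tag a \<le> stag (\<sigma>s c) s)"
  using op_invocation_cases[OF assms(1)] write_completion[OF _ assms(2)] read_op_tag[OF _ assms(2)] by metis

lemma tag_floor_after_completion:
  assumes "is_op ls a" "completes ls a c rr" "c \<le> i"
  shows "\<exists>Q. tag_floor Q (op_tag a) (wop (\<sigma>s c)) (rop (\<sigma>s c)) (issued_at i) (\<sigma>s i)"
  using op_tag_quorum[OF assms(1,2)] tag_floor_run assms(3) by blast

lemma later_write_tag_greater:
  assumes "is_op ls a" "completes ls a c rr" and b: "is_write ls b" "completes ls b cb rb" and "c < b"
  shows "op_tag a < op_tag b"
proof -
  let ?w = "op_proc ls b"
  have inv: "ls b = Inv ?w (OWrite (write_val ls b))" using write_invocation[OF b(1)] by blast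
  have "b < cb" using b(2) unfolding completes_def by simp
  then obtain Q where floor: "tag_floor Q (op_tag a) (wop (\<sigma>s c)) (rop (\<sigma>s c)) (issued_at cb) (\<sigma>s cb)"
    using tag_floor_after_completion[OF assms(1,2)] \<open>c < b\<close> by fastforce
  obtain v where issued: "issued_at cb ?w (write_counter b) = Some (op_tag b, v)"
    using write_completion[OF inv b(2)] by blast
  have "wop (\<sigma>s c) ?w \<le> wop (\<sigma>s b) ?w" using wop_run_mono \<open>c < b\<close> by simp
  moreover have "wop (\<sigma>s (Suc b)) ?w = Suc (wop (\<sigma>s b) ?w)" using invocation_step[OF run_step inv] by auto
  ultimately have "Suc (wop (\<sigma>s c) ?w) < write_counter b" unfolding write_counter_def by simp
  then show ?thesis using floor issued unfolding tag_floor_def floor_issues_def by blast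
qed

lemma later_read_tag_ge:
  assumes "is_op ls a" "completes ls a c rr" and b: "is_read ls b" "completes ls b cb rb" and "c < b"
  shows "op_tag a \<le> op_tag b"
proof -
  let ?r = "op_proc ls b"
  have inv: "ls b = Inv ?r ORead" using read_invocation[OF b(1)] by blast
  obtain src t v s A u where l: "ls cb = Dlv (src, ?r, ReadAck t v (?r, rop (\<sigma>s cb) ?r) s) (Some (RResp u))"
    and A: "rph (\<sigma>s cb) ?r = RWait A" "rop (\<sigma>s cb) ?r = rop (\<sigma>s (Suc b)) ?r"
    and dom: "dom (A(s \<mapsto> (t,v))) \<subseteq> S"
    and ack: "(src, ?r, ReadAck t v (?r, rop (\<sigma>s cb) ?r) s) \<in># net (\<sigma>s cb)"
    using read_completion[OF inv b(2)] by metis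
  have "b < cb" using b(2) unfolding completes_def by simp
  then obtain Q where floor: "tag_floor Q (op_tag a) (wop (\<sigma>s c)) (rop (\<sigma>s c)) (issued_at cb) (\<sigma>s cb)"
    using tag_floor_after_completion[OF assms(1,2)] \<open>c < b\<close> by fastforce
  have "rop (\<sigma>s c) ?r \<le> rop (\<sigma>s b) ?r" using rop_run_mono \<open>c < b\<close> by simp
  moreover have "rop (\<sigma>s (Suc b)) ?r = Suc (rop (\<sigma>s b) ?r)" using invocation_step[OF run_step inv] by auto
  ultimately have later: "rop (\<sigma>s c) ?r < rop (\<sigma>s cb) ?r" using A(2) by simp
  have "floor_read_acks (op_tag a) (rop (\<sigma>s c)) (\<sigma>s cb)" "floor_read_phase (op_tag a) (rop (\<sigma>s c)) (\<sigma>s cb)"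
    using floor by (simp_all add: tag_floor_def)
  then have "op_tag a \<le> t" "\<And>s' t' v'. A s' = Some (t',v') \<Longrightarrow> op_tag a \<le> t'"
    using ack A(1) later unfolding floor_read_acks_def floor_read_phase_def by (metis fst_conv snd_conv)+
  then have "op_tag a \<le> t'" if "(A(s \<mapsto> (t,v))) s' = Some (t',v')" for s' t' v'
    using that by (cases "s' = s") auto
  then have "\<forall>x\<in>fst ` ran (A(s \<mapsto> (t,v))). op_tag a \<le> x" unfolding ran_def by force
  moreover have "finite (ran (A(s \<mapsto> (t,v))))" using dom finS finite_subset finite_ran by blast
  moreover have "ran (A(s \<mapsto> (t,v))) \<noteq> {}" by (auto simp: ran_def)
  moreover have "op_tag b = Min (fst ` ran (A(s \<mapsto> (t,v))))" by (rule read_tag_is_min[OF inv b(2) l A(1)])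
  ultimately show ?thesis by simp
qed

lemma write_tag_wf:
  assumes "is_write ls a" "completes ls a c rr"
  shows "snd (op_tag a) = op_proc ls a \<and> 0 < fst (op_tag a)"
proof -
  obtain v where "issued_at c (op_proc ls a) (write_counter a) = Some (op_tag a, v)"
    using write_completion[OF conjunct1[OF write_invocation[OF assms(1)]] assms(2)] by blast
  then show ?thesis using issue_inv_run[of c] unfolding issue_inv_def issued_tags_wf_def by blast
qed

lemma write_completes_before_next:
  assumes a: "ls a = Inv w (OWrite x)" and b: "ls b = Inv w (OWrite y)" and "a < b"
    and cp: "completes ls a c rr"
  shows "c < b"
proof (rule ccontr)
  assume "\<not> c < b"
  then have "\<forall>j r. a < j \<longrightarrow> j < b \<longrightarrow> \<not> resp_by ls j w r"
    using cp a unfolding completes_def by (auto simp: op_proc_def)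
  then have "wph (\<sigma>s b) w \<noteq> WIdle" using write_in_progress[OF a \<open>a < b\<close>] by auto
  then show False using invocation_step[OF run_step b] by auto
qed

end

section \<open>Atomicity\<close>

definition atomic_order :: "(nat \<Rightarrow> ('p,'v) label) \<Rightarrow> (nat \<Rightarrow> nat \<Rightarrow> bool) \<Rightarrow> bool" where
  "atomic_order ls prec \<longleftrightarrow>
          (\<forall>a b. prec a b \<longrightarrow> is_op ls a \<and> is_op ls b)
        \<and> (\<forall>a. \<not> prec a a)
        \<and> (\<forall>a b c. prec a b \<and> prec b c \<longrightarrow> prec a c)
        \<and> (\<forall>a b j r. completes ls a j r \<and> is_op ls b \<and> j < b \<longrightarrow> \<not> prec b a)
        \<and> (\<forall>a b. is_write ls a \<and> is_write ls b \<and> a \<noteq> b \<longrightarrow> prec a b \<or> prec b a)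
        \<and> (\<forall>a b. is_read ls a \<and> is_write ls b \<longrightarrow> prec a b \<or> prec b a)
        \<and> (\<forall>a j u. is_read ls a \<and> completes ls a j (RResp u) \<longrightarrow>
             (\<exists>b. is_write ls b \<and> prec b a
                  \<and> (\<forall>c. is_write ls c \<and> prec c a \<longrightarrow> c = b \<or> prec c b)
                  \<and> u = Some (write_val ls b))
           \<or> ((\<forall>b. is_write ls b \<longrightarrow> \<not> prec b a) \<and> u = None))"

lemma atomicity_prop_iff:
  "atomicity_prop W R S f TYPE('v) \<longleftrightarrow>
     (\<forall>(\<sigma>s :: nat \<Rightarrow> ('p::linorder,'v) gstate) ls. execution W R S f \<sigma>s ls
        \<and> (\<forall>i. is_op ls i \<longrightarrow> (\<exists>j r. completes ls i j r)) \<longrightarrow> (\<exists>prec. atomic_order ls prec))"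
  unfolding atomicity_prop_def atomic_order_def ..

locale oh_mam_complete_run = oh_mam_run +
  assumes all_complete: "\<And>i. is_op ls i \<Longrightarrow> \<exists>j r. completes ls i j r"
begin

lemma write_tags_distinct:
  assumes a: "is_write ls a" and b: "is_write ls b" and "a \<noteq> b"
  shows "op_tag a \<noteq> op_tag b"
proof
  assume eq: "op_tag a = op_tag b"
  have "is_op ls a" "is_op ls b" using a b by (simp_all add: is_op_iff)
  then obtain ca ra cb rb where ca: "completes ls a ca ra" and cb: "completes ls b cb rb"
    using all_complete by meson
  have same: "op_proc ls a = op_proc ls b" using write_tag_wf[OF a ca] write_tag_wf[OF b cb] eq by simp
  have inv: "ls a = Inv (op_proc ls b) (OWrite (write_val ls a))" "ls b = Inv (op_proc ls b) (OWrite (write_val ls b))"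
    using write_invocation[OF a] write_invocation[OF b] same by auto
  show False
  proof (cases "a < b")
    case True
    have "ca < b" using write_completes_before_next[OF inv True ca] .
    then have "op_tag a < op_tag b" using later_write_tag_greater[OF \<open>is_op ls a\<close> ca b cb] by blast
    then show False using eq by simp
  next
    case False
    then have "b < a" using \<open>a \<noteq> b\<close> by simp
    then have "cb < a" using write_completes_before_next[OF inv(2,1) _ cb] by blast
    then have "op_tag b < op_tag a" using later_write_tag_greater[OF \<open>is_op ls b\<close> cb a ca] by blast
    then show False using eq by simp
  qed
qed

lemma read_returns_written_value:
  assumes "is_read ls a" and cp: "completes ls a c (RResp u)"
  shows "(fst (op_tag a) = 0 \<and> u = None) \<or> (\<exists>b. is_write ls b \<and> op_tag b = op_tag a \<and> u = Some (write_val ls b))"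
proof -
  have inv: "ls a = Inv (op_proc ls a) ORead" using read_invocation[OF assms(1)] by blast
  have valid: "valid_pair (issued_at c) (op_tag a) u" using read_op_tag[OF inv cp] by auto
  show ?thesis
  proof (cases "fst (op_tag a) = 0 \<and> u = None")
    case False
    then obtain k where k: "issued_at c (snd (op_tag a)) k = Some (op_tag a, u)"
      using valid unfolding valid_pair_def by blast
    obtain x b where b: "u = Some x" "ls b = Inv (snd (op_tag a)) (OWrite x)"
      "Suc (wop (\<sigma>s (Suc b)) (snd (op_tag a))) = k"
      using issued_at_origin[OF k] by blast
    then have "is_write ls b" "op_proc ls b = snd (op_tag a)" "write_val ls b = x" "write_counter b = k"
      by (auto simp: is_write_def op_proc_def write_val_def write_counter_def)
    then have "op_tag b = op_tag a" using issued_eq[OF k] by (simp add: op_tag_def)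
    then show ?thesis using \<open>is_write ls b\<close> \<open>write_val ls b = x\<close> b(1) by blast
  qed blast
qed

definition op_prec :: "nat \<Rightarrow> nat \<Rightarrow> bool" where
  "op_prec a b \<longleftrightarrow> is_op ls a \<and> is_op ls b
     \<and> (op_tag a < op_tag b \<or> (is_write ls a \<and> is_read ls b \<and> op_tag a = op_tag b))"

lemma op_prec_real_time:
  assumes "completes ls a j r" "is_op ls b" "j < b"
  shows "\<not> op_prec b a"
proof -
  have "is_op ls a" using assms(1) by (simp add: completes_def)
  moreover obtain cb rb where "completes ls b cb rb" using all_complete assms(2) by blast
  ultimately have "(is_write ls b \<longrightarrow> op_tag a < op_tag b) \<and> (is_read ls b \<longrightarrow> op_tag a \<le> op_tag b)"
    using later_write_tag_greater[OF _ assms(1)] later_read_tag_ge[OF _ assms(1)] assms(3) by blast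
  then show ?thesis using assms(2) write_not_read is_op_iff unfolding op_prec_def by fastforce
qed

lemma op_prec_read_value:
  assumes "is_read ls a" "completes ls a j (RResp u)"
  shows "(\<exists>b. is_write ls b \<and> op_prec b a \<and> (\<forall>c. is_write ls c \<and> op_prec c a \<longrightarrow> c = b \<or> op_prec c b)
            \<and> u = Some (write_val ls b))
         \<or> ((\<forall>b. is_write ls b \<longrightarrow> \<not> op_prec b a) \<and> u = None)"
  using read_returns_written_value[OF assms]
proof
  assume initial: "fst (op_tag a) = 0 \<and> u = None"
  have "\<not> op_prec b a" if "is_write ls b" for b
  proof
    have "is_op ls b" using that by (simp add: is_op_iff)
    then obtain cb rb where "completes ls b cb rb" using all_complete by blast
    then have "0 < fst (op_tag b)" using write_tag_wf[OF that] by blast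
    moreover assume "op_prec b a"
    then have "fst (op_tag b) \<le> fst (op_tag a)" unfolding op_prec_def by (auto intro: tag_le_imp_fst_le)
    ultimately show False using initial by simp
  qed
  then show ?thesis using initial by blast
next
  assume "\<exists>b. is_write ls b \<and> op_tag b = op_tag a \<and> u = Some (write_val ls b)"
  then obtain b where b: "is_write ls b" "op_tag b = op_tag a" "u = Some (write_val ls b)" by blast
  have "op_prec b a" using b assms(1) is_op_iff unfolding op_prec_def by auto
  moreover have "c = b \<or> op_prec c b" if c: "is_write ls c" "op_prec c a" for c
  proof (cases "c = b")
    case False
    then have "op_tag c \<noteq> op_tag b" using write_tags_distinct[OF c(1) b(1)] by blast
    moreover have "op_tag c \<le> op_tag a" using c(2) unfolding op_prec_def by auto
    ultimately show ?thesis using b c is_op_iff unfolding op_prec_def by auto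
  qed simp
  ultimately show ?thesis using b by blast
qed

theorem atomic_order_op_prec: "atomic_order ls op_prec"
  unfolding atomic_order_def
proof (intro conjI allI impI)
  fix a b assume "op_prec a b" then show "is_op ls a" "is_op ls b" by (auto simp: op_prec_def)
next
  fix a show "\<not> op_prec a a" using write_not_read by (auto simp: op_prec_def)
next
  fix a b c assume "op_prec a b \<and> op_prec b c"
  then show "op_prec a c" using write_not_read unfolding op_prec_def by (auto dest: order.strict_trans1)
next
  fix a b j r assume "completes ls a j r \<and> is_op ls b \<and> j < b"
  then show "\<not> op_prec b a" using op_prec_real_time by blast
next
  fix a b assume "is_write ls a \<and> is_write ls b \<and> a \<noteq> b"
  then show "op_prec a b \<or> op_prec b a"
    using write_tags_distinct[of a b] is_op_iff unfolding op_prec_def by (auto simp: neq_iff)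
next
  fix a b assume "is_read ls a \<and> is_write ls b"
  then show "op_prec a b \<or> op_prec b a" using is_op_iff unfolding op_prec_def by (auto simp: neq_iff)
next
  fix a j u assume "is_read ls a \<and> completes ls a j (RResp u)"
  then show "(\<exists>b. is_write ls b \<and> op_prec b a \<and> (\<forall>c. is_write ls c \<and> op_prec c a \<longrightarrow> c = b \<or> op_prec c b)
            \<and> u = Some (write_val ls b)) \<or> ((\<forall>b. is_write ls b \<longrightarrow> \<not> op_prec b a) \<and> u = None)"
    using op_prec_read_value by blast
qed

end

section \<open>Termination\<close>

context
  fixes W R S :: "'p::linorder set" and \<sigma> \<sigma>' :: "('p,'v) gstate" and l
  assumes step: "step W R S \<sigma> l \<sigma>'"
begin

lemma discover_answered:
  "l = Dlv (src, s, Discover k w) r \<Longrightarrow> s \<in> S \<Longrightarrow>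
   (s, w, DiscoverAck (stag \<sigma> s) (sval \<sigma> s) k s) \<in># net \<sigma>'"
  using step by (elim stepE) (auto simp: handled_def mem_diff_single_neq)

lemma write_request_answered:
  "l = Dlv (src, s, WriteRequest t v k w) r \<Longrightarrow> s \<in> S \<Longrightarrow> \<exists>t' v'. (s, w, WriteAck t' v' k s) \<in># net \<sigma>'"
  using step by (elim stepE) (auto simp: handled_def)

lemma read_request_relayed:
  "l = Dlv (src, s, ReadRequest rid) r \<Longrightarrow> s \<in> S \<Longrightarrow> finite S \<Longrightarrow> s2 \<in> S \<Longrightarrow>
   (s, s2, ReadRelay (stag \<sigma> s) (sval \<sigma> s) rid s) \<in># net \<sigma>'"
  using step by (elim stepE) (auto simp: handled_def mem_diff_single_neq)

lemma relay_recorded: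
  "l = Dlv (src, s2, ReadRelay t v rid s) r \<Longrightarrow> s2 \<in> S \<Longrightarrow>
   s \<in> srelays \<sigma>' s2 rid \<and> (quorum S \<le> card (srelays \<sigma>' s2 rid) \<longrightarrow> rid \<in> sacked \<sigma>' s2)"
  using step by (elim stepE) (auto simp: handled_def)

lemma read_ack_sent_when_marked:
  "rid \<in> sacked \<sigma>' s \<Longrightarrow> rid \<notin> sacked \<sigma> s \<Longrightarrow> \<exists>t v. (s, fst rid, ReadAck t v rid s) \<in># net \<sigma>'"
  using step by (elim stepE; auto split: if_splits simp: mem_diff_single_neq)

lemma discover_ack_recorded:
  "l = Dlv (src, w, DiscoverAck t v (wop \<sigma> w) s) r \<Longrightarrow> w \<in> W \<Longrightarrow>
   wph \<sigma> w = WDisc x A \<Longrightarrow> wph \<sigma>' w = WDisc x' A' \<Longrightarrow>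
   wph \<sigma>' w = WDisc x (A(s \<mapsto> t)) \<and> card (dom (A(s \<mapsto> t))) < quorum S"
  using step by (elim stepE) (auto simp: handled_def)

lemma write_ack_recorded:
  "l = Dlv (src, w, WriteAck t v (wop \<sigma> w) s) None \<Longrightarrow> w \<in> W \<Longrightarrow> wph \<sigma> w = WWrite A \<Longrightarrow>
   wph \<sigma>' w = WWrite (insert s A) \<and> card (insert s A) < quorum S"
  using step by (elim stepE) (auto simp: handled_def)

lemma read_ack_recorded:
  "l = Dlv (src, r, ReadAck t v (r, rop \<sigma> r) s) None \<Longrightarrow> r \<in> R \<Longrightarrow> rph \<sigma> r = RWait A \<Longrightarrow>
   rph \<sigma>' r = RWait (A(s \<mapsto> (t,v))) \<and> card (dom (A(s \<mapsto> (t,v)))) < quorum S"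
  using step by (elim stepE) (auto simp: handled_def)

lemma write_requests_sent:
  "wph \<sigma> w = WDisc x A \<Longrightarrow> wph \<sigma>' w = WWrite A' \<Longrightarrow> finite S \<Longrightarrow>
   \<exists>t. \<forall>s\<in>S. (w, s, WriteRequest t (Some x) (Suc (wop \<sigma> w)) w) \<in># net \<sigma>'"
  using step by (elim stepE; auto split: if_splits simp: mem_diff_single_neq)

end

locale oh_mam_fair_run = oh_mam_run +
  assumes few_crashes: "2 * f < card S" and fair: "fair \<sigma>s ls"
begin

lemma delivered: "(src,d,m) \<in># net (\<sigma>s i) \<Longrightarrow> correct \<sigma>s d \<Longrightarrow> \<exists>j\<ge>i. \<exists>r. ls j = Dlv (src,d,m) r"
  using fair unfolding fair_def by blast

lemma correct_servers_quorum: "quorum S \<le> card {s\<in>S. correct \<sigma>s s}"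
proof -
  let ?C = "{s\<in>S. correct \<sigma>s s}"
  have "\<forall>s\<in>S - ?C. \<exists>i. s \<in> crashed (\<sigma>s i)" unfolding correct_def by blast
  then obtain crash_time where crash_time: "\<And>s. s \<in> S - ?C \<Longrightarrow> s \<in> crashed (\<sigma>s (crash_time s))"
    by metis
  define T where "T = Max (insert 0 (crash_time ` (S - ?C)))"
  have "S - ?C \<subseteq> crashed (\<sigma>s T) \<inter> S"
  proof
    fix s assume s: "s \<in> S - ?C"
    have "crash_time s \<le> T" unfolding T_def using finS s by (intro Max_ge) auto
    then show "s \<in> crashed (\<sigma>s T) \<inter> S" using crashed_run_mono crash_time[OF s] s by blast
  qed
  then have "card (S - ?C) \<le> card (crashed (\<sigma>s T) \<inter> S)" by (rule card_mono[rotated]) (simp add: finS)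
  also have "\<dots> \<le> f" using run unfolding execution_def by blast
  finally have "card S - card ?C \<le> f" using finS by (simp add: card_Diff_subset)
  moreover have "card ?C \<le> card S" using finS by (intro card_mono) auto
  ultimately show ?thesis using few_crashes unfolding quorum_def by linarith
qed

lemma read_ack_sent_before:
  "rid \<in> sacked (\<sigma>s j) s \<Longrightarrow> \<exists>j'\<le>j. \<exists>t v. (s, fst rid, ReadAck t v rid s) \<in># net (\<sigma>s j')"
proof (induction j)
  case 0 then show ?case by (simp add: run_init init_state_def)
next
  case (Suc j)
  show ?case
  proof (cases "rid \<in> sacked (\<sigma>s j) s")
    case True then show ?thesis using Suc.IH le_SucI by blast
  next
    case False then show ?thesis using read_ack_sent_when_marked[OF run_step Suc.prems] by blast
  qed
qed

lemma completes_if_responds: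
  assumes "is_op ls i" and "\<exists>j>i. \<exists>rr. resp_by ls j (op_proc ls i) rr"
  shows "\<exists>j rr. completes ls i j rr"
proof -
  let ?P = "\<lambda>j. i < j \<and> (\<exists>rr. resp_by ls j (op_proc ls i) rr)"
  define j where "j = (LEAST j. ?P j)"
  have "?P j" unfolding j_def using assms(2) by (rule LeastI_ex)
  moreover have "\<not> ?P k" if "k < j" for k using not_less_Least[OF that[unfolded j_def]] .
  ultimately obtain rr where "completes ls i j rr" unfolding completes_def using assms(1) by blast
  then show ?thesis by blast
qed

end

context oh_mam_run
begin

lemma discover_acks_finite: "wph (\<sigma>s c) w = WDisc x A \<Longrightarrow> finite (dom A)"
  using wf_state_run[of c] finS unfolding wf_state_def discover_phase_servers_def
  by (meson rev_finite_subset)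

lemma write_acks_finite: "wph (\<sigma>s c) w = WWrite A \<Longrightarrow> finite A"
  using wf_state_run[of c] finS unfolding wf_state_def write_phase_servers_def
  by (meson rev_finite_subset)

lemma read_acks_finite: "rph (\<sigma>s c) r = RWait A \<Longrightarrow> finite (dom A)"
  using wf_state_run[of c] finS unfolding wf_state_def read_phase_servers_def
  by (meson rev_finite_subset)

end

context oh_mam_fair_run
begin

context
  fixes i w x
  assumes inv: "ls i = Inv w (OWrite x)" and correct_w: "correct \<sigma>s w"
    and silent: "\<forall>j rr. i < j \<longrightarrow> \<not> resp_by ls j w rr"
begin

lemma silent_write_phases:
  "i < c \<Longrightarrow> (\<exists>A. wph (\<sigma>s c) w = WDisc x A \<and> wop (\<sigma>s c) w = wop (\<sigma>s (Suc i)) w)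
     \<or> (\<exists>A. wph (\<sigma>s c) w = WWrite A \<and> wop (\<sigma>s c) w = Suc (wop (\<sigma>s (Suc i)) w))"
  using write_in_progress[OF inv] silent by blast

lemma silent_write_reaches_write_phase: "\<exists>c>i. \<exists>A. wph (\<sigma>s c) w = WWrite A"
proof (rule ccontr)
  assume "\<not> ?thesis"
  then have disc: "\<exists>A. wph (\<sigma>s c) w = WDisc x A \<and> wop (\<sigma>s c) w = wop (\<sigma>s (Suc i)) w" if "i < c" for c
    using silent_write_phases[OF that] that by blast
  define D where "D c = (case wph (\<sigma>s c) w of WDisc y A \<Rightarrow> dom A | _ \<Rightarrow> {})" for c
  have "D c \<subseteq> D (Suc c)" if "Suc i \<le> c" for c
    using disc[of c] disc[of "Suc c"] that discover_acks_grow[OF run_step] unfolding D_def by force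
  moreover have "finite (D c)" for c
    using discover_acks_finite unfolding D_def by (auto split: wphase.split)
  moreover have "\<exists>j\<ge>Suc i. s \<in> D j \<and> card (D j) < quorum S" if s: "s \<in> S" "correct \<sigma>s s" for s
  proof -
    have w: "w \<in> W" and "(w, s, Discover (wop (\<sigma>s (Suc i)) w) w) \<in># net (\<sigma>s (Suc i))"
      using invocation_step[OF run_step inv] s finS by auto
    then obtain j1 r1 where j1: "Suc i \<le> j1" "ls j1 = Dlv (w, s, Discover (wop (\<sigma>s (Suc i)) w) w) r1"
      using delivered s by blast
    let ?ack = "(s, w, DiscoverAck (stag (\<sigma>s j1) s) (sval (\<sigma>s j1) s) (wop (\<sigma>s (Suc i)) w) s)"
    have "?ack \<in># net (\<sigma>s (Suc j1))" using discover_answered[OF run_step j1(2) s(1)] .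
    then obtain j2 r2 where j2: "Suc j1 \<le> j2" "ls j2 = Dlv ?ack r2" using delivered correct_w by blast
    obtain A2 A3 where A: "wph (\<sigma>s j2) w = WDisc x A2" "wop (\<sigma>s j2) w = wop (\<sigma>s (Suc i)) w"
      "wph (\<sigma>s (Suc j2)) w = WDisc x A3"
      using disc[of j2] disc[of "Suc j2"] j1 j2 by auto
    have "wph (\<sigma>s (Suc j2)) w = WDisc x (A2(s \<mapsto> stag (\<sigma>s j1) s))
      \<and> card (dom (A2(s \<mapsto> stag (\<sigma>s j1) s))) < quorum S"
      using discover_ack_recorded[OF run_step[of j2] _ w A(1,3)] j2(2) A(2) by metis
    then show ?thesis using j1 j2 unfolding D_def by (intro exI[of _ "Suc j2"]) auto
  qed
  ultimately show False
    using growing_sets_cannot_stay_small[of "Suc i" D "{s\<in>S. correct \<sigma>s s}" "quorum S"]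
      correct_servers_quorum finS by (auto simp: quorum_def)
qed

lemma silent_write_requests_sent:
  "\<exists>c1>i. \<exists>t. (\<forall>s\<in>S. (w, s, WriteRequest t (Some x) (Suc (wop (\<sigma>s (Suc i)) w)) w) \<in># net (\<sigma>s c1))
     \<and> (\<forall>c\<ge>c1. \<exists>A. wph (\<sigma>s c) w = WWrite A \<and> wop (\<sigma>s c) w = Suc (wop (\<sigma>s (Suc i)) w))"
proof -
  let ?k = "Suc (wop (\<sigma>s (Suc i)) w)"
  let ?P = "\<lambda>c. i < c \<and> (\<exists>A. wph (\<sigma>s c) w = WWrite A)"
  define c1 where "c1 = (LEAST c. ?P c)"
  have P1: "?P c1" unfolding c1_def using LeastI_ex[of ?P] silent_write_reaches_write_phase by blast
  have "wph (\<sigma>s (Suc i)) w = WDisc x Map.empty" using invocation_step[OF run_step inv] by auto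
  then have "c1 \<noteq> Suc i" using P1 by auto
  then obtain d where d: "c1 = Suc d" "i < d" using P1 by (cases c1) auto
  have "\<not> ?P d" using not_less_Least[of d ?P] d(1) unfolding c1_def by simp
  then obtain A where A: "wph (\<sigma>s d) w = WDisc x A" "wop (\<sigma>s d) w = wop (\<sigma>s (Suc i)) w"
    using silent_write_phases[OF d(2)] d(2) by blast
  obtain A1 where "wph (\<sigma>s (Suc d)) w = WWrite A1" using P1 d(1) by blast
  from write_requests_sent[OF run_step[of d] A(1) this finS]
  obtain t where requests: "\<forall>s\<in>S. (w, s, WriteRequest t (Some x) ?k w) \<in># net (\<sigma>s c1)"
    unfolding A(2) d(1) by blast
  have c1_counter: "wop (\<sigma>s c1) w = ?k" using silent_write_phases[of c1] P1 by auto
  have "\<exists>A. wph (\<sigma>s c) w = WWrite A \<and> wop (\<sigma>s c) w = ?k" if "c1 \<le> c" for c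
  proof -
    have "?k \<le> wop (\<sigma>s c) w" using wop_run_mono[OF that, of w] c1_counter by simp
    moreover have "i < c" using P1 that by simp
    ultimately show ?thesis using silent_write_phases[of c] by auto
  qed
  then show ?thesis using P1 requests by blast
qed

lemma silent_write_absurd: False
proof -
  let ?k = "Suc (wop (\<sigma>s (Suc i)) w)"
  obtain c1 t where "i < c1" and requests: "\<forall>s\<in>S. (w, s, WriteRequest t (Some x) ?k w) \<in># net (\<sigma>s c1)"
    and "\<forall>c\<ge>c1. \<exists>A. wph (\<sigma>s c) w = WWrite A \<and> wop (\<sigma>s c) w = ?k"
    using silent_write_requests_sent by blast
  then have write_phase: "\<exists>A. wph (\<sigma>s c) w = WWrite A \<and> wop (\<sigma>s c) w = ?k" if "c1 \<le> c" for c
    using that by blast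
  have w: "w \<in> W" using invocation_step[OF run_step inv] by auto
  define D where "D c = (case wph (\<sigma>s c) w of WWrite A \<Rightarrow> A | _ \<Rightarrow> {})" for c
  have "D c \<subseteq> D (Suc c)" if "c1 \<le> c" for c
    using write_phase[of c] write_phase[of "Suc c"] that write_acks_grow[OF run_step] unfolding D_def by force
  moreover have "finite (D c)" for c
    using write_acks_finite unfolding D_def by (auto split: wphase.split)
  moreover have "\<exists>j\<ge>c1. s \<in> D j \<and> card (D j) < quorum S" if s: "s \<in> S" "correct \<sigma>s s" for s
  proof -
    obtain j1 r1 where j1: "c1 \<le> j1" "ls j1 = Dlv (w, s, WriteRequest t (Some x) ?k w) r1"
      using delivered requests s by blast
    obtain t' v' where "(s, w, WriteAck t' v' ?k s) \<in># net (\<sigma>s (Suc j1))"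
      using write_request_answered[OF run_step j1(2) s(1)] by blast
    then obtain j2 r2 where j2: "Suc j1 \<le> j2" "ls j2 = Dlv (s, w, WriteAck t' v' ?k s) r2"
      using delivered correct_w by blast
    have "i < j2" using \<open>i < c1\<close> j1 j2 by simp
    then have "r2 = None" using silent j2(2) unfolding resp_by_def by (cases r2) auto
    obtain A2 where A2: "wph (\<sigma>s j2) w = WWrite A2" "wop (\<sigma>s j2) w = ?k" using write_phase[of j2] j1 j2 by auto
    have "wph (\<sigma>s (Suc j2)) w = WWrite (insert s A2) \<and> card (insert s A2) < quorum S"
      using write_ack_recorded[OF run_step[of j2] _ w A2(1)] j2(2) A2(2) \<open>r2 = None\<close> by metis
    then show ?thesis using j1 j2 unfolding D_def by (intro exI[of _ "Suc j2"]) auto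
  qed
  ultimately show False
    using growing_sets_cannot_stay_small[of c1 D "{s\<in>S. correct \<sigma>s s}" "quorum S"]
      correct_servers_quorum finS by (auto simp: quorum_def)
qed

end

end

context oh_mam_fair_run
begin

context
  fixes i r
  assumes inv: "ls i = Inv r ORead" and correct_r: "correct \<sigma>s r"
    and silent: "\<forall>j rr. i < j \<longrightarrow> \<not> resp_by ls j r rr"
begin

abbreviation "read_id \<equiv> (r, rop (\<sigma>s (Suc i)) r)"

lemma silent_read_phase: "i < c \<Longrightarrow> \<exists>A. rph (\<sigma>s c) r = RWait A \<and> rop (\<sigma>s c) r = rop (\<sigma>s (Suc i)) r"
  using read_in_progress[OF inv] silent by blast

lemma silent_read_relay_recorded:
  assumes s: "s \<in> S" "correct \<sigma>s s" and s2: "s2 \<in> S" "correct \<sigma>s s2"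
  shows "\<exists>j\<ge>Suc i. s \<in> srelays (\<sigma>s (Suc j)) s2 read_id
    \<and> (quorum S \<le> card (srelays (\<sigma>s (Suc j)) s2 read_id) \<longrightarrow> read_id \<in> sacked (\<sigma>s (Suc j)) s2)"
proof -
  have "(r, s, ReadRequest read_id) \<in># net (\<sigma>s (Suc i))" using invocation_step[OF run_step inv] s finS by auto
  then obtain j1 r1 where j1: "Suc i \<le> j1" "ls j1 = Dlv (r, s, ReadRequest read_id) r1"
    using delivered s by blast
  have "(s, s2, ReadRelay (stag (\<sigma>s j1) s) (sval (\<sigma>s j1) s) read_id s) \<in># net (\<sigma>s (Suc j1))"
    using read_request_relayed[OF run_step j1(2) s(1) finS s2(1)] .
  then obtain j3 r3 where j3: "Suc j1 \<le> j3"
    "ls j3 = Dlv (s, s2, ReadRelay (stag (\<sigma>s j1) s) (sval (\<sigma>s j1) s) read_id s) r3"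
    using delivered s2 by blast
  then show ?thesis using relay_recorded[OF run_step j3(2) s2(1)] j1 by (intro exI[of _ j3]) auto
qed

lemma silent_read_acknowledged:
  assumes s2: "s2 \<in> S" "correct \<sigma>s s2"
  shows "\<exists>j>i. \<exists>t v. (s2, r, ReadAck t v read_id s2) \<in># net (\<sigma>s j)"
proof -
  have "\<exists>j. read_id \<in> sacked (\<sigma>s j) s2"
  proof (rule ccontr)
    assume never: "\<nexists>j. read_id \<in> sacked (\<sigma>s j) s2"
    define D where "D j = srelays (\<sigma>s (Suc j)) s2 read_id" for j
    have "D j \<subseteq> D (Suc j)" for j unfolding D_def by (rule srelays_step_mono[OF run_step])
    moreover have "finite (D j)" for j
      using wf_state_run[of "Suc j"] finS unfolding D_def wf_state_def relay_sets_issued_def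
      by (meson rev_finite_subset)
    moreover have "\<exists>j\<ge>Suc i. s \<in> D j \<and> card (D j) < quorum S" if "s \<in> S" "correct \<sigma>s s" for s
      using silent_read_relay_recorded[OF that s2] never unfolding D_def not_le[symmetric] by blast
    ultimately show False
      using growing_sets_cannot_stay_small[of "Suc i" D "{s\<in>S. correct \<sigma>s s}" "quorum S"]
        correct_servers_quorum finS by (auto simp: quorum_def)
  qed
  then obtain j0 where "read_id \<in> sacked (\<sigma>s j0) s2" ..
  from read_ack_sent_before[OF this] obtain j t v where j: "(s2, r, ReadAck t v read_id s2) \<in># net (\<sigma>s j)"
    by auto
  have "rop (\<sigma>s (Suc i)) r \<le> rop (\<sigma>s j) r"
    using wf_state_run[of j] j unfolding wf_state_def read_acks_issued_def by fastforce
  moreover have "rop (\<sigma>s (Suc i)) r = Suc (rop (\<sigma>s i) r)" using invocation_step[OF run_step inv] by auto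
  ultimately have "i < j" using rop_run_mono[of j i r] by (cases "i < j") auto
  then show ?thesis using j by blast
qed

lemma silent_read_absurd: False
proof -
  have r: "r \<in> R" using invocation_step[OF run_step inv] by auto
  define D where "D c = (case rph (\<sigma>s c) r of RWait A \<Rightarrow> dom A | _ \<Rightarrow> {})" for c
  have "D c \<subseteq> D (Suc c)" if "Suc i \<le> c" for c
    using silent_read_phase[of c] silent_read_phase[of "Suc c"] that read_acks_grow[OF run_step]
    unfolding D_def by force
  moreover have "finite (D c)" for c
    using read_acks_finite unfolding D_def by (auto split: rphase.split)
  moreover have "\<exists>j\<ge>Suc i. s \<in> D j \<and> card (D j) < quorum S" if s: "s \<in> S" "correct \<sigma>s s" for s
  proof -
    obtain j t v where j: "i < j" "(s, r, ReadAck t v read_id s) \<in># net (\<sigma>s j)"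
      using silent_read_acknowledged[OF s] by blast
    then obtain j4 r4 where j4: "j \<le> j4" "ls j4 = Dlv (s, r, ReadAck t v read_id s) r4"
      using delivered correct_r by blast
    have "i < j4" using j j4 by simp
    then have "r4 = None" using silent j4(2) unfolding resp_by_def by (cases r4) auto
    obtain A where A: "rph (\<sigma>s j4) r = RWait A" "rop (\<sigma>s j4) r = rop (\<sigma>s (Suc i)) r"
      using silent_read_phase[OF \<open>i < j4\<close>] by blast
    have "rph (\<sigma>s (Suc j4)) r = RWait (A(s \<mapsto> (t,v))) \<and> card (dom (A(s \<mapsto> (t,v)))) < quorum S"
      using read_ack_recorded[OF run_step[of j4] _ r A(1)] j4(2) A(2) \<open>r4 = None\<close> by metis
    then show ?thesis using \<open>i < j4\<close> unfolding D_def by (intro exI[of _ "Suc j4"]) auto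
  qed
  ultimately show False
    using growing_sets_cannot_stay_small[of "Suc i" D "{s\<in>S. correct \<sigma>s s}" "quorum S"]
      correct_servers_quorum finS by (auto simp: quorum_def)
qed

end

theorem operations_terminate:
  assumes "is_op ls i" "correct \<sigma>s (op_proc ls i)"
  shows "\<exists>j r. completes ls i j r"
proof (rule completes_if_responds[OF assms(1)], rule ccontr)
  assume "\<not> (\<exists>j>i. \<exists>rr. resp_by ls j (op_proc ls i) rr)"
  then have silent: "\<forall>j rr. i < j \<longrightarrow> \<not> resp_by ls j (op_proc ls i) rr" by blast
  from op_invocation_cases[OF assms(1)] show False
  proof (elim disjE exE conjE)
    fix w x assume "ls i = Inv w (OWrite x)"
    moreover from this have "op_proc ls i = w" by (simp add: op_proc_def)
    ultimately show False using silent_write_absurd assms(2) silent by metis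
  next
    fix r assume "ls i = Inv r ORead"
    moreover from this have "op_proc ls i = r" by (simp add: op_proc_def)
    ultimately show False using silent_read_absurd assms(2) silent by metis
  qed
qed

end

theorem mainTheorem2:
  fixes W R S :: "'p::linorder set" and f :: nat
  assumes "W \<inter> R = {}" and "W \<inter> S = {}" and "R \<inter> S = {}"
    and "2 * f < card S"
  shows "termination_prop W R S f TYPE('v)
       \<and> atomicity_prop W R S f TYPE('v)"
proof
  have "finite S" using assms(4) card.infinite by fastforce
  show "termination_prop W R S f TYPE('v)"
    unfolding termination_prop_def
  proof (intro allI impI)
    fix \<sigma>s :: "nat \<Rightarrow> ('p,'v) gstate" and ls i
    assume "execution W R S f \<sigma>s ls \<and> fair \<sigma>s ls" and op: "is_op ls i \<and> correct \<sigma>s (op_proc ls i)"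
    then interpret oh_mam_fair_run W R S f \<sigma>s ls
      using assms \<open>finite S\<close> by unfold_locales auto
    show "\<exists>j r. completes ls i j r" using operations_terminate op by blast
  qed
  show "atomicity_prop W R S f TYPE('v)"
    unfolding atomicity_prop_iff
  proof (intro allI impI)
    fix \<sigma>s :: "nat \<Rightarrow> ('p,'v) gstate" and ls
    assume "execution W R S f \<sigma>s ls \<and> (\<forall>i. is_op ls i \<longrightarrow> (\<exists>j r. completes ls i j r))"
    then interpret oh_mam_complete_run W R S f \<sigma>s ls
      using assms \<open>finite S\<close> by unfold_locales auto
    show "\<exists>prec. atomic_order ls prec" using atomic_order_op_prec by blast
  qed
qed

end
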